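(* Let $k\ge 2$ and $\ell\ge 0$ be constants. There is a deterministic $\mathsf{Online}$-$\mathsf{LOCAL}$ algorithm with locality $O(\log n)$ that properly colors every $n$-node connected graph in $\mathcal{L}_{k,\ell}$ using colors from $\{1,\dots,k+1\}$.
   Context: A graph is $k$-partite if it admits a proper coloring with $k$ colors. For a graph $G=(V,E)$, $U\subseteq V$ and an integer $T\ge 0$, $\mathcal{B}(U,T)$ denotes the set of nodes at distance at most $T$ from some node of $U$, and $G[U]$ denotes the induced subgraph. Locally inferable unique colorings: let $G$ be a $k$-partite graph and $\ell\ge0$ an integer. For a connected subgraph $G'=(V',E')$ of $G$, let $\mathcal{C}^*(G',\ell)$ be the set of all proper $k$-colorings (colors $\{1,\dots,k\}$) of $G[\mathcal{B}(V',\ell)]$, and $\mathcal{C}(G',\ell)$ the set of restrictions to $V'$ of colorings in $\mathcal{C}^*(G',\ell)$. Two $k$-colorings $c,c'$ are identical up to a permutation if $c'=\phi\circ c$ for some permutation $\phi$ of $\{1,\dots,k\}$. $\mathcal{L}_{k,\ell}$ is the class of $k$-partite graphs $G$ such that for every connected subgraph $G'$ of $G$, all colorings in $\mathcal{C}(G',\ell)$ are identical up to a permutation. The $\mathsf{Online}$-$\mathsf{LOCAL}$ model: an algorithm with locality $T=T(n)$ is deterministic and knows $n$. The adversary chooses an $n$-node input graph $G=(V,E)$ from the input family, assigns distinct identifiers from $\{1,\dots,\mathrm{poly}(n)\}$ to its nodes, and chooses an ordering $\sigma=(v_1,\dots,v_n)$ of $V$. For $i=1,\dots,n$, when $v_i$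 is presented, the algorithm must irrevocably assign an output (here a color) to $v_i$ as a function of the sequence $(v_1,\dots,v_i)$ and the induced subgraph $G_i=G\big[\bigcup_{j\le i}\mathcal{B}(v_j,T)\big]$ (with identifiers); thus the algorithm has global memory of everything seen so far. The algorithm solves a coloring problem on an input family if for every choice of the adversary the final coloring is proper and uses only the allowed colors. The locality of a problem is the minimum locality of an algorithm solving it. *)

theory Defs
  imports Main "HOL-Library.Landau_Symbols"
begin

text \<open>Graphs: nodes are identified with their (distinct) identifiers, which are
natural numbers. A graph is a finite vertex set with a symmetric irreflexive
edge relation contained in V x V.\<close>

definition graph :: "nat set \<Rightarrow> (nat \<times> nat) set \<Rightarrow> bool" where
  "graph V E \<longleftrightarrow> finite V \<and> E \<subseteq> V \<times> V \<and> sym E \<and> (\<forall>v. (v, v) \<notin> E)"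

fun nball :: "(nat \<times> nat) set \<Rightarrow> nat set \<Rightarrow> nat \<Rightarrow> nat set" where
  "nball E U 0 = U"
| "nball E U (Suc t) = nball E U t \<union> {v. \<exists>u\<in>nball E U t. (u, v) \<in> E}"

definition induced_edges :: "(nat \<times> nat) set \<Rightarrow> nat set \<Rightarrow> (nat \<times> nat) set" where
  "induced_edges E W = E \<inter> (W \<times> W)"

definition proper_coloring :: "nat \<Rightarrow> nat set \<Rightarrow> (nat \<times> nat) set \<Rightarrow> (nat \<Rightarrow> nat) \<Rightarrow> bool" where
  "proper_coloring k W F c \<longleftrightarrow> (\<forall>v\<in>W. c v \<in> {1..k}) \<and> (\<forall>(u, v)\<in>F. c u \<noteq> c v)"

definition k_partite :: "nat \<Rightarrow> nat set \<Rightarrow> (nat \<times> nat) set \<Rightarrow> bool" where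
  "k_partite k V E \<longleftrightarrow> (\<exists>c. proper_coloring k V E c)"

definition connected_graph :: "nat set \<Rightarrow> (nat \<times> nat) set \<Rightarrow> bool" where
  "connected_graph V' E' \<longleftrightarrow> (\<forall>u\<in>V'. \<forall>v\<in>V'. (u, v) \<in> (E' \<union> E'\<inverse>)\<^sup>*)"

definition in_L :: "nat \<Rightarrow> nat \<Rightarrow> nat set \<Rightarrow> (nat \<times> nat) set \<Rightarrow> bool" where
  "in_L k l V E \<longleftrightarrow> k_partite k V E \<and>
     (\<forall>V' E'. V' \<subseteq> V \<and> E' \<subseteq> E \<inter> (V' \<times> V') \<and> connected_graph V' E' \<longrightarrow>
        (\<forall>c c'. proper_coloring k (nball E V' l) (induced_edges E (nball E V' l)) c \<and>
                proper_coloring k (nball E V' l) (induced_edges E (nball E V' l)) c' \<longrightarrow>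
           (\<exists>\<phi>. bij_betw \<phi> {1..k} {1..k} \<and> (\<forall>v\<in>V'. c' v = \<phi> (c v)))))"

text \<open>A deterministic Online-LOCAL algorithm: given n, the prefix (v_1,...,v_i) of the
ordering, and the induced subgraph G_i (vertex set and edges, with identifiers),
it outputs a color for v_i.\<close>
type_synonym online_alg = "nat \<Rightarrow> nat list \<Rightarrow> nat set \<Rightarrow> (nat \<times> nat) set \<Rightarrow> nat"

text \<open>Output assigned to the i-th presented node (0-based index), with locality T.\<close>
definition online_output :: "online_alg \<Rightarrow> nat \<Rightarrow> nat \<Rightarrow> (nat \<times> nat) set \<Rightarrow> nat list \<Rightarrow> nat \<Rightarrow> nat" where
  "online_output A n T E \<sigma> i =
     (let pre = take (Suc i) \<sigma>; W = nball E (set pre) T in A n pre W (induced_edges E W))"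

end

theory Submission
  imports Defs "HOL-Library.Discrete_Functions"
begin

text \<open>
  The algorithm explores the ball of radius \<open>R = (3k+1)(2 + \<lfloor>log n\<rfloor>)\<close> around the presented
  nodes and keeps a base \<open>k\<close>-colouring that is proper on every connected component of this
  explored region. When the component of a newly presented node absorbs older components, it is
  recoloured by a proper \<open>k\<close>-colouring of its \<open>l\<close>-neighbourhood that agrees with the old base
  colouring on the winner, the absorbed component with the most presented nodes. Because the graph
  lies in \<open>L\<^sub>k\<^sub>,\<^sub>l\<close>, on every other absorbed component (a loser) the new base colouring is a
  permutation \<open>\<pi>\<close> of the old one. The presented nodes of a loser must keep their colours, so
  around them a zone of width \<open>(3k+1)(2 + \<lfloor>log s\<rfloor>)\<close>, where \<open>s\<close> is the number of presented nodes
  of the loser, interpolates between the old colouring and its image under \<open>\<pi>\<close>: the permutation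
  is realised by \<open>3k\<close> moves, each changing one colour class with the help of the spare colour
  \<open>k+1\<close>, and adjacent nodes are at most one move apart.

  Zones that touch are nested: the later loser contains the whole merged component of the
  earlier one and, as a loser never has more presented nodes than the winner, at least twice as
  many presented nodes. So the later zone is wider by at least \<open>3k+1\<close> and the earlier zone lies in
  its interior, where the old base colouring is kept; a node takes the colour prescribed by the
  earliest zone containing it. Everything computed at time \<open>t\<close> depends only on the ball of radius
  \<open>R + l\<close> around the first \<open>t\<close> presented nodes, which is what the algorithm sees.
\<close>

section \<open>Balls and distances in graphs\<close>

lemma nball_mono_radius: "r \<le> r' \<Longrightarrow> nball E U r \<subseteq> nball E U r'"
proof (induction r')
  case (Suc r')
  then show ?case by (cases "r = Suc r'") (auto simp: le_Suc_eq)
qed simp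

lemma nball_mono: "U \<subseteq> U' \<Longrightarrow> nball E U r \<subseteq> nball E U' r"
  by (induction r) auto

lemma subset_nball: "U \<subseteq> nball E U r"
  using nball_mono_radius[of 0 r E U] by simp

lemma nball_nball: "nball E (nball E U a) b = nball E U (a + b)"
  by (induction b) auto

lemma nball_Un: "nball E (A \<union> B) r = nball E A r \<union> nball E B r"
  by (induction r) auto

lemma nball_empty: "nball E {} r = {}"
  by (induction r) auto

lemma nball_subset: "E \<subseteq> V \<times> V \<Longrightarrow> U \<subseteq> V \<Longrightarrow> nball E U r \<subseteq> V"
  by (induction r) auto

lemma nball_restrict_edges:
  assumes "nball E U r \<subseteq> W"
  shows "nball (E \<inter> (W \<times> W)) U r = nball E U r"
  using assms
proof (induction r)
  case (Suc r)
  have "nball E U r \<subseteq> W"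
    using Suc.prems nball_mono_radius[of r "Suc r" E U] by auto
  with Suc show ?case by auto
qed simp

lemma nball_singleton_cover: "y \<in> nball E U r \<Longrightarrow> \<exists>u\<in>U. y \<in> nball E {u} r"
proof (induction r arbitrary: y)
  case (Suc r)
  show ?case
  proof (cases "y \<in> nball E U r")
    case True
    then obtain u where "u \<in> U" "y \<in> nball E {u} r"
      using Suc.IH by blast
    then show ?thesis
      using nball_mono_radius[of r "Suc r" E "{u}"] by auto
  next
    case False
    with Suc show ?thesis by fastforce
  qed
qed simp

text \<open>\<open>set_dist E S x\<close> is the distance from \<open>x\<close> to \<open>S\<close>; it is meaningful only for \<open>x\<close> in some
  ball around \<open>S\<close>.\<close>

definition set_dist :: "(nat \<times> nat) set \<Rightarrow> nat set \<Rightarrow> nat \<Rightarrow> nat" where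
  "set_dist E S x = (LEAST r. x \<in> nball E S r)"

lemma set_dist_le: "x \<in> nball E S r \<Longrightarrow> set_dist E S x \<le> r"
  unfolding set_dist_def by (rule Least_le)

lemma in_nball_set_dist: "x \<in> nball E S r \<Longrightarrow> x \<in> nball E S (set_dist E S x)"
  unfolding set_dist_def by (rule LeastI)

lemma in_nball_iff_set_dist_le:
  "x \<in> nball E S r \<Longrightarrow> x \<in> nball E S r' \<longleftrightarrow> set_dist E S x \<le> r'"
  using in_nball_set_dist[of x E S r] nball_mono_radius[of "set_dist E S x" r' E S]
    set_dist_le[of x E S r'] by auto

lemma set_dist_adjacent:
  assumes "x \<in> nball E S r" "(x, y) \<in> E"
  shows "y \<in> nball E S (Suc (set_dist E S x))" "set_dist E S y \<le> Suc (set_dist E S x)"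
proof -
  show y: "y \<in> nball E S (Suc (set_dist E S x))"
    using in_nball_set_dist[OF assms(1)] assms(2) by auto
  show "set_dist E S y \<le> Suc (set_dist E S x)"
    using set_dist_le[OF y] .
qed

lemma set_dist_antimono:
  assumes "S \<subseteq> S'" "x \<in> nball E S r"
  shows "set_dist E S' x \<le> set_dist E S x"
  using in_nball_set_dist[OF assms(2)] nball_mono[OF assms(1)] by (blast intro: set_dist_le)

lemma set_dist_cong:
  assumes x: "x \<in> nball E S r" and eq: "\<And>r'. r' \<le> r \<Longrightarrow> nball F S r' = nball E S r'"
  shows "set_dist F S x = set_dist E S x"
proof (rule antisym)
  have d: "set_dist E S x \<le> r"
    using set_dist_le[OF x] .
  then have xF: "x \<in> nball F S (set_dist E S x)"
    using in_nball_set_dist[OF x] eq by simp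
  show le: "set_dist F S x \<le> set_dist E S x"
    using set_dist_le[OF xF] .
  have "x \<in> nball E S (set_dist F S x)"
    using in_nball_set_dist[OF xF] eq le d by simp
  then show "set_dist E S x \<le> set_dist F S x"
    by (rule set_dist_le)
qed

definition zone_width :: "nat \<Rightarrow> nat \<Rightarrow> nat" where
  "zone_width k s = (3 * k + 1) * (2 + floor_log s)"

lemma zone_width_mono: "s \<le> s' \<Longrightarrow> zone_width k s \<le> zone_width k s'"
  unfolding zone_width_def by (intro mult_le_mono2 add_left_mono floor_log_le_iff)

lemma zone_width_double:
  assumes "1 \<le> s" "2 * s \<le> s'"
  shows "zone_width k s + (3 * k + 1) \<le> zone_width k s'"
proof -
  have "Suc (floor_log s) \<le> floor_log s'"
    using floor_log_le_iff[OF assms(2)] assms(1) by simp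
  then have "(3 * k + 1) * (2 + Suc (floor_log s)) \<le> (3 * k + 1) * (2 + floor_log s')"
    by (intro mult_le_mono2) simp
  then show ?thesis
    unfolding zone_width_def by (simp add: algebra_simps)
qed

lemma zone_width_ge: "2 * (3 * k + 1) \<le> zone_width k s"
  unfolding zone_width_def by simp

lemma floor_log_le_log: "0 < n \<Longrightarrow> real (floor_log n) \<le> log 2 (real n)"
proof -
  assume "0 < n"
  then have "real (2 ^ floor_log n) \<le> real n"
    using floor_log_exp2_le of_nat_le_iff by blast
  with \<open>0 < n\<close> show ?thesis
    by (simp add: le_log_iff powr_realpow)
qed

lemma zone_width_bigo: "(\<lambda>n. real (zone_width k n + l)) \<in> O(\<lambda>n. ln (real n))"
proof (rule bigoI[where c = "(3 * (3 * k + 1) + l) / ln 2"])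
  show "\<forall>\<^sub>F n in at_top. norm (real (zone_width k n + l)) \<le>
        (3 * (3 * k + 1) + l) / ln 2 * norm (ln (real n))"
    using eventually_ge_at_top[of "2::nat"]
  proof eventually_elim
    case (elim n)
    define X where "X = log 2 (real n)"
    have X1: "1 \<le> X"
      unfolding X_def using elim by simp
    have fX: "real (floor_log n) \<le> X"
      unfolding X_def using floor_log_le_log elim by simp
    have "real (zone_width k n + l) = real (3 * k + 1) * (2 + real (floor_log n)) + real l"
      unfolding zone_width_def by (simp add: algebra_simps)
    also have "\<dots> \<le> real (3 * k + 1) * (3 * X) + real l * X"
      using X1 fX by (intro add_mono mult_left_mono) (auto simp: mult_le_cancel_left1)
    also have "\<dots> = (3 * (3 * k + 1) + l) / ln 2 * ln (real n)"
      unfolding X_def log_def by (simp add: field_simps)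
    finally show ?case
      using elim by simp
  qed
qed

section \<open>Realising a permutation by single recolourings\<close>

text \<open>Maps from the base colours \<open>{1..k}\<close> to colours, \<open>k+1\<close> being the spare colour. Adjacent
  nodes of a zone are coloured by the same or by consecutive maps of a path of recolouring steps;
  since a step only moves one base colour to an unused colour, distinct base colours stay distinct
  across a step.\<close>

definition spare_inj :: "nat \<Rightarrow> (nat \<Rightarrow> nat) \<Rightarrow> bool" where
  "spare_inj k f \<longleftrightarrow> inj_on f {1..k} \<and> f ` {1..k} \<subseteq> {1..k+1}"

definition recolour_step :: "nat \<Rightarrow> (nat \<Rightarrow> nat) \<Rightarrow> (nat \<Rightarrow> nat) \<Rightarrow> bool" where
  "recolour_step k f g \<longleftrightarrow> (\<forall>a\<in>{1..k}. g a = f a) \<or>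
     (\<exists>m\<in>{1..k}. \<exists>c. c \<notin> f ` {1..k} \<and> (\<forall>a\<in>{1..k}. g a = (if a = m then c else f a)))"

lemma recolour_step_refl: "recolour_step k f f"
  unfolding recolour_step_def by simp

lemma recolour_step_upd: "m \<in> {1..k} \<Longrightarrow> c \<notin> f ` {1..k} \<Longrightarrow> recolour_step k f (f(m := c))"
  unfolding recolour_step_def by (intro disjI2 bexI[of _ m] exI[of _ c]) auto

lemma spare_inj_upd:
  assumes f: "spare_inj k f" and c: "c \<notin> f ` {1..k}" "c \<in> {1..k+1}"
  shows "spare_inj k (f(m := c))"
proof -
  have "inj_on (f(m := c)) {1..k}"
    using f c(1) unfolding spare_inj_def by (blast intro: inj_on_fun_updI)
  moreover have "(f(m := c)) ` {1..k} \<subseteq> insert c (f ` {1..k})"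
    unfolding fun_upd_image by auto
  moreover have "insert c (f ` {1..k}) \<subseteq> {1..k+1}"
    using f c(2) unfolding spare_inj_def by simp
  ultimately show ?thesis
    unfolding spare_inj_def by (meson order_trans)
qed

lemma recolour_step_distinct:
  assumes f: "spare_inj k f" and "recolour_step k f g" and a: "a \<in> {1..k}" "a' \<in> {1..k}" "a \<noteq> a'"
  shows "f a \<noteq> g a'"
proof -
  have fa: "f a \<noteq> f a'"
    using f a unfolding spare_inj_def inj_on_def by blast
  from \<open>recolour_step k f g\<close> consider "\<forall>a\<in>{1..k}. g a = f a"
    | m c where "c \<notin> f ` {1..k}" "\<forall>a\<in>{1..k}. g a = (if a = m then c else f a)"
    unfolding recolour_step_def by blast
  then show ?thesis
  proof cases
    case 1
    then show ?thesis
      using fa a(2) by simp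
  next
    case (2 m c)
    then show ?thesis
      using fa a by (cases "a' = m") auto
  qed
qed

text \<open>Moving base colour \<open>a\<close> to colour \<open>j\<close> in three steps: the base colour \<open>b\<close> currently
  coloured \<open>j\<close> is parked at the spare colour, \<open>a\<close> takes colour \<open>j\<close>, and \<open>b\<close> takes the old colour
  of \<open>a\<close>.\<close>

definition swap_via_spare ::
    "nat \<Rightarrow> nat \<Rightarrow> nat \<Rightarrow> (nat \<Rightarrow> nat) \<Rightarrow> (nat \<Rightarrow> nat) \<times> (nat \<Rightarrow> nat) \<times> (nat \<Rightarrow> nat)" where
  "swap_via_spare k a j g = (let b = (SOME b. b \<in> {1..k} \<and> g b = j) in
     if g a = j then (g, g, g)
     else (g(b := k+1), g(b := k+1, a := j), g(b := k+1, a := j, b := g a)))"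

lemma fun_upd_not_in_image: "inj_on g A \<Longrightarrow> x \<in> A \<Longrightarrow> c \<noteq> g x \<Longrightarrow> g x \<notin> g(x := c) ` A"
  unfolding inj_on_def by auto

lemma swap_moves:
  assumes g: "inj_on g {1..k}" "g ` {1..k} = {1..k}" and a: "a \<in> {1..k}" and b: "b \<in> {1..k}"
    and j: "j \<in> {1..k}" "g b = j" "g a \<noteq> j"
    and m: "m1 = g(b := k+1)" "m2 = m1(a := j)" "m3 = m2(b := g a)"
  shows "recolour_step k g m1 \<and> recolour_step k m1 m2 \<and> recolour_step k m2 m3 \<and>
    spare_inj k m1 \<and> spare_inj k m2 \<and> spare_inj k m3"
proof -
  have sg: "spare_inj k g"
    using g unfolding spare_inj_def by auto
  have ga: "g a \<in> {1..k}"
    using g(2) a by blast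
  have c1: "k+1 \<notin> g ` {1..k}"
    using g(2) by auto
  have s1: "spare_inj k m1"
    unfolding m(1) by (rule spare_inj_upd[OF sg c1]) simp
  have c2: "j \<notin> m1 ` {1..k}"
    using fun_upd_not_in_image[OF g(1) b, of "k+1"] j m(1) by simp
  have "m1 a = g a"
    using j m(1) by auto
  then have c3: "g a \<notin> m2 ` {1..k}"
    using fun_upd_not_in_image[of m1 "{1..k}" a j] s1 a j m(2) unfolding spare_inj_def by simp
  have s2: "spare_inj k m2"
    unfolding m(2) by (rule spare_inj_upd[OF s1 c2]) (use j in simp)
  have s3: "spare_inj k m3"
    unfolding m(3) by (rule spare_inj_upd[OF s2 c3]) (use ga in simp)
  show ?thesis
    using recolour_step_upd[OF b c1] recolour_step_upd[OF a c2] recolour_step_upd[OF b c3]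
      s1 s2 s3 m by simp
qed

lemma swap_via_spare_props:
  assumes g: "inj_on g {1..k}" "g ` {1..k} = {1..k}" and a: "a \<in> {1..k}" and j: "j \<in> {1..k}"
    and moves: "swap_via_spare k a j g = (m1, m2, m3)"
  shows "recolour_step k g m1 \<and> recolour_step k m1 m2 \<and> recolour_step k m2 m3 \<and>
    spare_inj k m1 \<and> spare_inj k m2 \<and> spare_inj k m3 \<and>
    m3 ` {1..k} \<subseteq> {1..k} \<and> m3 a = j \<and> (\<forall>u\<in>{1..k}. u \<noteq> a \<and> g u \<noteq> j \<longrightarrow> m3 u = g u)"
proof (cases "g a = j")
  case True
  then have "m1 = g" "m2 = g" "m3 = g"
    using moves by (auto simp: swap_via_spare_def Let_def)
  then show ?thesis
    using g True unfolding spare_inj_def by (simp add: recolour_step_refl)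
next
  case False
  define b where "b = (SOME b. b \<in> {1..k} \<and> g b = j)"
  have "j \<in> g ` {1..k}"
    using j g(2) by simp
  then have "\<exists>b. b \<in> {1..k} \<and> g b = j"
    by blast
  from someI_ex[OF this] have b: "b \<in> {1..k}" "g b = j"
    unfolding b_def[symmetric] by simp_all
  have m: "m1 = g(b := k+1)" "m2 = m1(a := j)" "m3 = m2(b := g a)"
    using moves False unfolding swap_via_spare_def Let_def b_def[symmetric] by auto
  have "m3 u \<in> {1..k}" if "u \<in> {1..k}" for u
  proof -
    have "g u \<in> {1..k}" "g a \<in> {1..k}"
      using g(2) that a by blast+
    then show ?thesis
      using j unfolding m by simp
  qed
  moreover have "m3 a = j" "\<forall>u\<in>{1..k}. u \<noteq> a \<and> g u \<noteq> j \<longrightarrow> m3 u = g u"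
    using False b unfolding m by auto
  ultimately show ?thesis
    using swap_moves[OF g a b(1) j b(2) False m] by blast
qed

primrec relabel_stage :: "nat \<Rightarrow> (nat \<Rightarrow> nat) \<Rightarrow> nat \<Rightarrow> nat \<Rightarrow> nat" where
  "relabel_stage k \<pi> 0 = id"
| "relabel_stage k \<pi> (Suc j) =
     snd (snd (swap_via_spare k (inv_into {1..k} \<pi> (Suc j)) (Suc j) (relabel_stage k \<pi> j)))"

lemma relabel_stage_props:
  assumes \<pi>: "bij_betw \<pi> {1..k} {1..k}" and "j \<le> k"
  shows "inj_on (relabel_stage k \<pi> j) {1..k} \<and> relabel_stage k \<pi> j ` {1..k} = {1..k} \<and>
    (\<forall>i\<in>{1..j}. relabel_stage k \<pi> j (inv_into {1..k} \<pi> i) = i)"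
  using assms(2)
proof (induction j)
  case (Suc j)
  let ?g = "relabel_stage k \<pi> j"
  define a where "a = inv_into {1..k} \<pi> (Suc j)"
  have j: "Suc j \<in> {1..k}"
    using Suc.prems by simp
  have IH: "inj_on ?g {1..k}" "?g ` {1..k} = {1..k}" "\<forall>i\<in>{1..j}. ?g (inv_into {1..k} \<pi> i) = i"
    using Suc by auto
  have a: "a \<in> {1..k}"
    unfolding a_def using \<pi> j by (metis bij_betw_def inv_into_into)
  obtain m1 m2 m3 where moves: "swap_via_spare k a (Suc j) ?g = (m1, m2, m3)"
    by (metis prod_cases3)
  have m3: "spare_inj k m3" "m3 ` {1..k} \<subseteq> {1..k}" "m3 a = Suc j"
    "\<forall>u\<in>{1..k}. u \<noteq> a \<and> ?g u \<noteq> Suc j \<longrightarrow> m3 u = ?g u"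
    using swap_via_spare_props[OF IH(1,2) a j moves] by auto
  have stage: "relabel_stage k \<pi> (Suc j) = m3"
    using moves by (simp add: a_def)
  have "m3 (inv_into {1..k} \<pi> i) = i" if i: "i \<in> {1..Suc j}" for i
  proof (cases "i = Suc j")
    case False
    then have i': "i \<in> {1..j}" "i \<in> {1..k}"
      using i j by auto
    then have "inv_into {1..k} \<pi> i \<in> {1..k}"
      using \<pi> by (metis bij_betw_def inv_into_into)
    moreover have "inv_into {1..k} \<pi> i \<noteq> a"
      using inv_into_injective[of "{1..k}" \<pi> i "Suc j"] \<pi> i' j False
      unfolding a_def bij_betw_def by auto
    ultimately show ?thesis
      using m3(4) IH(3) i' by auto
  qed (use m3(3) a_def in simp)
  moreover have "inj_on m3 {1..k}"
    using m3(1) unfolding spare_inj_def by blast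
  moreover have "m3 ` {1..k} = {1..k}"
    using calculation(2) m3(2) by (simp add: endo_inj_surj)
  ultimately show ?case
    unfolding stage by simp
qed simp

text \<open>The colour map at level \<open>s\<close>: stage \<open>j\<close> at level \<open>3j\<close>, the two intermediate moves at
  levels \<open>3j+1\<close> and \<open>3j+2\<close>, and the final stage, which is \<open>\<pi>\<close> on \<open>{1..k}\<close>, from level \<open>3k\<close> on.\<close>

definition relabel_path :: "nat \<Rightarrow> (nat \<Rightarrow> nat) \<Rightarrow> nat \<Rightarrow> nat \<Rightarrow> nat" where
  "relabel_path k \<pi> s = (if 3 * k \<le> s then relabel_stage k \<pi> k else
     (let j = s div 3;
          (m1, m2, _) = swap_via_spare k (inv_into {1..k} \<pi> (Suc j)) (Suc j) (relabel_stage k \<pi> j)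
      in if s mod 3 = 0 then relabel_stage k \<pi> j else if s mod 3 = 1 then m1 else m2))"

lemma relabel_path_stage: "j \<le> k \<Longrightarrow> relabel_path k \<pi> (3 * j) = relabel_stage k \<pi> j"
  unfolding relabel_path_def by (auto simp: Let_def split: prod.split)

lemma relabel_path_0: "relabel_path k \<pi> 0 = id"
  using relabel_path_stage[of 0 k \<pi>] by simp

lemma relabel_path_end:
  assumes \<pi>: "bij_betw \<pi> {1..k} {1..k}" and "3 * k \<le> s" and a: "a \<in> {1..k}"
  shows "relabel_path k \<pi> s a = \<pi> a"
proof -
  have "\<pi> a \<in> {1..k}" "inv_into {1..k} \<pi> (\<pi> a) = a"
    using \<pi> a by (auto simp: bij_betw_def inv_into_f_f)
  moreover have "relabel_path k \<pi> s = relabel_stage k \<pi> k"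
    using assms(2) unfolding relabel_path_def by simp
  ultimately show ?thesis
    using relabel_stage_props[OF \<pi> order_refl] by metis
qed

lemma relabel_path_stage_steps:
  assumes \<pi>: "bij_betw \<pi> {1..k} {1..k}" and jk: "j < k"
  shows "spare_inj k (relabel_path k \<pi> (3 * j)) \<and> spare_inj k (relabel_path k \<pi> (3 * j + 1)) \<and>
    spare_inj k (relabel_path k \<pi> (3 * j + 2)) \<and>
    recolour_step k (relabel_path k \<pi> (3 * j)) (relabel_path k \<pi> (3 * j + 1)) \<and>
    recolour_step k (relabel_path k \<pi> (3 * j + 1)) (relabel_path k \<pi> (3 * j + 2)) \<and>
    recolour_step k (relabel_path k \<pi> (3 * j + 2)) (relabel_path k \<pi> (3 * Suc j))"
proof -
  let ?g = "relabel_stage k \<pi> j"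
  have g: "inj_on ?g {1..k}" "?g ` {1..k} = {1..k}"
    using relabel_stage_props[OF \<pi>, of j] jk by auto
  have a: "inv_into {1..k} \<pi> (Suc j) \<in> {1..k}"
    using \<pi> jk by (metis atLeastAtMost_iff bij_betw_def inv_into_into Suc_leI le_add1 plus_1_eq_Suc)
  obtain m1 m2 m3
    where moves: "swap_via_spare k (inv_into {1..k} \<pi> (Suc j)) (Suc j) ?g = (m1, m2, m3)"
    by (metis prod_cases3)
  have "(3 * j + 1) div 3 = j" "(3 * j + 1) mod 3 = 1"
    "(3 * j + 2) div 3 = j" "(3 * j + 2) mod 3 = 2"
    by presburger+
  then have "relabel_path k \<pi> (3 * j + 1) = m1" "relabel_path k \<pi> (3 * j + 2) = m2"
    using jk moves unfolding relabel_path_def by (simp_all only: Let_def) auto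
  moreover have "relabel_path k \<pi> (3 * j) = ?g" "relabel_path k \<pi> (3 * Suc j) = m3"
    using relabel_path_stage[of j k \<pi>] relabel_path_stage[of "Suc j" k \<pi>] jk moves by simp_all
  moreover have "spare_inj k ?g"
    using g unfolding spare_inj_def by auto
  ultimately show ?thesis
    using swap_via_spare_props[OF g a _ moves] jk by auto
qed

lemma relabel_path_step:
  assumes \<pi>: "bij_betw \<pi> {1..k} {1..k}"
  shows "spare_inj k (relabel_path k \<pi> s) \<and>
    recolour_step k (relabel_path k \<pi> s) (relabel_path k \<pi> (Suc s))"
proof (cases "3 * k \<le> s")
  case True
  then have "relabel_path k \<pi> s = relabel_stage k \<pi> k"
    "relabel_path k \<pi> (Suc s) = relabel_stage k \<pi> k"
    unfolding relabel_path_def by auto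
  then show ?thesis
    using relabel_stage_props[OF \<pi> order_refl] recolour_step_refl unfolding spare_inj_def by auto
next
  case False
  define j where "j = s div 3"
  have "j < k"
    using False unfolding j_def by linarith
  note steps = relabel_path_stage_steps[OF \<pi> this]
  consider "s = 3 * j" | "s = 3 * j + 1" | "s = 3 * j + 2"
    unfolding j_def by linarith
  then show ?thesis
  proof cases
    case 3
    then have "Suc s = 3 * Suc j"
      by simp
    with 3 show ?thesis
      using steps by (simp only:)
  qed (use steps in simp_all)
qed

lemma relabel_path_distinct:
  assumes \<pi>: "bij_betw \<pi> {1..k} {1..k}" and a: "a \<in> {1..k}" "a' \<in> {1..k}" "a \<noteq> a'"
    and s: "s' = s \<or> s' = Suc s \<or> s = Suc s'"
  shows "relabel_path k \<pi> s a \<noteq> relabel_path k \<pi> s' a'"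
  using s
proof (elim disjE)
  assume "s' = s"
  then show ?thesis
    using relabel_path_step[OF \<pi>, of s] a unfolding spare_inj_def inj_on_def by blast
next
  assume "s' = Suc s"
  then show ?thesis
    using relabel_path_step[OF \<pi>, of s] recolour_step_distinct a by blast
next
  assume "s = Suc s'"
  then show ?thesis
    using relabel_path_step[OF \<pi>, of s'] recolour_step_distinct a by metis
qed

lemma relabel_path_range:
  "bij_betw \<pi> {1..k} {1..k} \<Longrightarrow> a \<in> {1..k} \<Longrightarrow> relabel_path k \<pi> s a \<in> {1..k+1}"
  using relabel_path_step[of \<pi> k s] unfolding spare_inj_def by blast

lemma proper_coloring_subset:
  assumes "proper_coloring k W (induced_edges E W) c" "W' \<subseteq> W"
  shows "proper_coloring k W' (induced_edges E W') c"
  using assms unfolding proper_coloring_def induced_edges_def by auto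

lemma proper_coloring_permute:
  assumes c: "proper_coloring k V E c" and \<phi>: "bij_betw \<phi> {1..k} {1..k}" and "W \<subseteq> V"
  shows "proper_coloring k W (induced_edges E W) (\<phi> \<circ> c)"
proof -
  have range: "c v \<in> {1..k}" if "v \<in> W" for v
    using c that \<open>W \<subseteq> V\<close> unfolding proper_coloring_def by auto
  show ?thesis
    unfolding proper_coloring_def
  proof (intro conjI ballI)
    show "(\<phi> \<circ> c) v \<in> {1..k}" if "v \<in> W" for v
      using bij_betw_apply[OF \<phi> range[OF that]] by simp
    fix e
    assume "e \<in> induced_edges E W"
    then obtain u v where e: "e = (u, v)" "(u, v) \<in> E" "u \<in> W" "v \<in> W"
      unfolding induced_edges_def by auto
    then have "c u \<noteq> c v"
      using c unfolding proper_coloring_def by auto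
    then have "\<phi> (c u) \<noteq> \<phi> (c v)"
      using range e(3,4) \<phi> unfolding bij_betw_def by (metis inj_on_contraD)
    then show "case e of (u, v) \<Rightarrow> (\<phi> \<circ> c) u \<noteq> (\<phi> \<circ> c) v"
      using e(1) by simp
  qed
qed

section \<open>The algorithm\<close>

text \<open>A run of the algorithm with exploration radius \<open>R\<close> on the presentation order \<open>\<sigma>\<close>, evaluated
  on whatever edge set \<open>E\<close> it is given. Time \<open>t \<ge> 1\<close> is the moment at which \<open>\<sigma> ! (t - 1)\<close> is
  presented; at time \<open>0\<close> nothing has been presented and every base colour is the junk value \<open>0\<close>.\<close>

locale online_run =
  fixes k l R :: nat and E :: "(nat \<times> nat) set" and \<sigma> :: "nat list"
begin

definition presented :: "nat \<Rightarrow> nat set" where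
  "presented t = set (take t \<sigma>)"

definition explored :: "nat \<Rightarrow> nat set" where
  "explored t = nball E (presented t) R"

definition component :: "nat \<Rightarrow> nat \<Rightarrow> nat set" where
  "component t x = {y \<in> explored t. (x, y) \<in> (E \<inter> (explored t \<times> explored t))\<^sup>*}"

definition node :: "nat \<Rightarrow> nat" where
  "node t = \<sigma> ! (t - 1)"

definition new_component :: "nat \<Rightarrow> nat set" where
  "new_component t = component t (node t)"

definition absorbed :: "nat \<Rightarrow> nat set set" where
  "absorbed t = component (t - 1) ` (new_component t \<inter> explored (t - 1))"

definition presented_count :: "nat \<Rightarrow> nat set \<Rightarrow> nat" where
  "presented_count t C = card (C \<inter> presented t)"

definition winner :: "nat \<Rightarrow> nat set" where
  "winner t = (SOME C. C \<in> absorbed t \<and>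
     (\<forall>C'\<in>absorbed t. presented_count (t - 1) C' \<le> presented_count (t - 1) C))"

definition losers :: "nat \<Rightarrow> nat set set" where
  "losers t = absorbed t - {winner t}"

primrec base_colour :: "nat \<Rightarrow> nat \<Rightarrow> nat" where
  "base_colour 0 = (\<lambda>x. 0)"
| "base_colour (Suc t) = (let K = new_component (Suc t); B = nball E K l;
      c = (SOME c. proper_coloring k B (induced_edges E B) c \<and>
             (absorbed (Suc t) \<noteq> {} \<longrightarrow> (\<forall>y\<in>winner (Suc t). c y = base_colour t y)))
    in (\<lambda>x. if x \<in> K then c x else base_colour t x))"

definition new_colouring :: "nat \<Rightarrow> nat \<Rightarrow> nat" where
  "new_colouring t = (SOME c.
     proper_coloring k (nball E (new_component t) l)
       (induced_edges E (nball E (new_component t) l)) c \<and>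
     (absorbed t \<noteq> {} \<longrightarrow> (\<forall>y\<in>winner t. c y = base_colour (t - 1) y)))"

definition loses :: "nat \<Rightarrow> nat set \<Rightarrow> bool" where
  "loses t L \<longleftrightarrow> 1 \<le> t \<and> L \<in> losers t"

definition seeds :: "nat \<Rightarrow> nat set \<Rightarrow> nat set" where
  "seeds t L = L \<inter> presented (t - 1)"

definition zone_radius :: "nat \<Rightarrow> nat set \<Rightarrow> nat" where
  "zone_radius t L = zone_width k (card (seeds t L))"

definition zone :: "nat \<Rightarrow> nat set \<Rightarrow> nat set" where
  "zone t L = nball E (seeds t L) (zone_radius t L - 1)"

definition transition_perm :: "nat \<Rightarrow> nat set \<Rightarrow> nat \<Rightarrow> nat" where
  "transition_perm t L = (SOME \<pi>. bij_betw \<pi> {1..k} {1..k} \<and>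
     (\<forall>x\<in>L. base_colour t x = \<pi> (base_colour (t - 1) x)))"

text \<open>Inside the zone of a loser the relabelling level runs from \<open>0\<close> to \<open>3k\<close> over the outer
  \<open>3k + 1\<close> layers; deeper nodes, in particular the presented ones, keep their old base colour.\<close>

definition zone_colour :: "nat \<Rightarrow> nat set \<Rightarrow> nat \<Rightarrow> nat" where
  "zone_colour t L x = relabel_path k (transition_perm t L)
     (set_dist E (seeds t L) x + (3 * k + 1) - zone_radius t L) (base_colour (t - 1) x)"

definition in_zone :: "nat \<Rightarrow> nat \<Rightarrow> bool" where
  "in_zone t x \<longleftrightarrow> (\<exists>t' L. t' \<le> t \<and> loses t' L \<and> x \<in> zone t' L)"

definition zone_time :: "nat \<Rightarrow> nat \<Rightarrow> nat" where
  "zone_time t x = (LEAST t'. \<exists>L. t' \<le> t \<and> loses t' L \<and> x \<in> zone t' L)"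

definition zone_loser :: "nat \<Rightarrow> nat \<Rightarrow> nat set" where
  "zone_loser t x = (SOME L. loses (zone_time t x) L \<and> x \<in> zone (zone_time t x) L)"

definition label :: "nat \<Rightarrow> nat \<Rightarrow> nat" where
  "label t x =
     (if in_zone t x then zone_colour (zone_time t x) (zone_loser t x) x else base_colour t x)"

definition output_colour :: "nat \<Rightarrow> nat" where
  "output_colour t = label t (node t)"

lemma base_colour_Suc:
  "base_colour (Suc t) x =
     (if x \<in> new_component (Suc t) then new_colouring (Suc t) x else base_colour t x)"
  unfolding new_colouring_def by (simp add: Let_def)

lemma zone_time_props:
  assumes "in_zone t x"
  shows "zone_time t x \<le> t \<and> loses (zone_time t x) (zone_loser t x) \<and>
    x \<in> zone (zone_time t x) (zone_loser t x)"
proof -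
  let ?P = "\<lambda>t'. \<exists>L. t' \<le> t \<and> loses t' L \<and> x \<in> zone t' L"
  have "\<exists>t'. ?P t'"
    using assms unfolding in_zone_def by blast
  then have "?P (zone_time t x)"
    unfolding zone_time_def by (rule LeastI_ex)
  then obtain L where L: "zone_time t x \<le> t" "loses (zone_time t x) L" "x \<in> zone (zone_time t x) L"
    by blast
  have "loses (zone_time t x) (zone_loser t x) \<and> x \<in> zone (zone_time t x) (zone_loser t x)"
    unfolding zone_loser_def using L(2,3) by (rule someI[where x = L, OF conjI])
  then show ?thesis
    using L(1) by blast
qed

lemma zone_time_le:
  assumes "t' \<le> t" "loses t' L" "x \<in> zone t' L"
  shows "zone_time t x \<le> t'"
proof -
  have "\<exists>L. t' \<le> t \<and> loses t' L \<and> x \<in> zone t' L"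
    using assms by blast
  then show ?thesis
    unfolding zone_time_def by (rule Least_le)
qed

lemma zone_time_least:
  assumes "in_zone t x" "t' < zone_time t x" "loses t' L"
  shows "x \<notin> zone t' L"
  using zone_time_le[of t' t L x] zone_time_props[OF assms(1)] assms(2,3) by auto

lemma zone_time_Suc:
  assumes "in_zone t x"
  shows "in_zone (Suc t) x \<and> zone_time (Suc t) x = zone_time t x \<and>
    zone_loser (Suc t) x = zone_loser t x"
proof -
  have p: "zone_time t x \<le> t" "loses (zone_time t x) (zone_loser t x)"
    "x \<in> zone (zone_time t x) (zone_loser t x)"
    using zone_time_props[OF assms] by auto
  then have Suc: "in_zone (Suc t) x"
    unfolding in_zone_def using le_SucI by blast
  have "zone_time (Suc t) x \<le> zone_time t x"
    using zone_time_le[of "zone_time t x" "Suc t" "zone_loser t x" x] p by simp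
  moreover have "\<not> zone_time (Suc t) x < zone_time t x"
    using zone_time_least[OF assms] zone_time_props[OF Suc] by blast
  ultimately have "zone_time (Suc t) x = zone_time t x"
    by simp
  then show ?thesis
    using Suc unfolding zone_loser_def by simp
qed

lemma zone_time_new:
  assumes "in_zone (Suc t) x" "\<not> in_zone t x"
  shows "zone_time (Suc t) x = Suc t"
proof (rule ccontr)
  assume "zone_time (Suc t) x \<noteq> Suc t"
  then have "zone_time (Suc t) x \<le> t"
    using zone_time_props[OF assms(1)] by simp
  then show False
    using zone_time_props[OF assms(1)] assms(2) unfolding in_zone_def by blast
qed

lemma zone_radius_ge: "2 * (3 * k + 1) \<le> zone_radius t L"
  unfolding zone_radius_def by (rule zone_width_ge)

lemma zone_subset_nball: "zone t L \<subseteq> nball E (seeds t L) (zone_radius t L)"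
  unfolding zone_def by (rule nball_mono_radius) simp

lemma set_dist_zone: "x \<in> zone t L \<Longrightarrow> set_dist E (seeds t L) x < zone_radius t L"
  using set_dist_le[of x E "seeds t L" "zone_radius t L - 1"] zone_radius_ge[of t L]
  unfolding zone_def by simp

lemma in_zone_iff:
  assumes "x \<in> nball E (seeds t L) r"
  shows "x \<in> zone t L \<longleftrightarrow> set_dist E (seeds t L) x < zone_radius t L"
  using in_nball_iff_set_dist_le[OF assms, of "zone_radius t L - 1"] zone_radius_ge[of t L]
  unfolding zone_def by auto

lemma seeds_in_zone: "x \<in> seeds t L \<Longrightarrow> x \<in> zone t L"
  unfolding zone_def using subset_nball by blast

lemma zone_colour_inner:
  assumes "set_dist E (seeds t L) x + (3 * k + 1) \<le> zone_radius t L"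
  shows "zone_colour t L x = base_colour (t - 1) x"
  using assms unfolding zone_colour_def by (simp add: relabel_path_0)

lemma zone_colour_seed: "x \<in> seeds t L \<Longrightarrow> zone_colour t L x = base_colour (t - 1) x"
  using set_dist_le[of x E "seeds t L" 0] zone_radius_ge[of t L] by (intro zone_colour_inner) simp

end

locale online_run_graph = online_run +
  fixes V :: "nat set"
  assumes graph: "graph V E" and in_L: "in_L k l V E" and distinct: "distinct \<sigma>"
    and set_\<sigma>: "set \<sigma> = V" and radius: "zone_width k (card V) \<le> R"
begin

abbreviation "n \<equiv> length \<sigma>"

abbreviation "explored_edges t \<equiv> E \<inter> (explored t \<times> explored t)"

abbreviation "proper_on W c \<equiv> proper_coloring k W (induced_edges E W) c"

lemma finite_V: "finite V"
  using graph unfolding graph_def by auto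

lemma E_subset: "E \<subseteq> V \<times> V"
  using graph unfolding graph_def by auto

lemma sym_E: "(x, y) \<in> E \<Longrightarrow> (y, x) \<in> E"
  using graph unfolding graph_def sym_def by auto

lemma presented_mono: "t \<le> t' \<Longrightarrow> presented t \<subseteq> presented t'"
  unfolding presented_def by (metis set_take_subset_set_take)

lemma presented_subset_V: "presented t \<subseteq> V"
  unfolding presented_def using set_\<sigma> by (metis set_take_subset)

lemma finite_presented: "finite (presented t)"
  unfolding presented_def by simp

lemma presented_subset_explored: "presented t \<subseteq> explored t"
  unfolding explored_def by (rule subset_nball)

lemma explored_subset_V: "explored t \<subseteq> V"
  unfolding explored_def using nball_subset[OF E_subset presented_subset_V] .

lemma finite_explored: "finite (explored t)"
  using explored_subset_V finite_V by (rule finite_subset)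

lemma explored_mono: "t \<le> t' \<Longrightarrow> explored t \<subseteq> explored t'"
  unfolding explored_def using presented_mono nball_mono by blast

lemma explored_0: "explored 0 = {}"
  unfolding explored_def presented_def using nball_empty by simp

lemma component_subset: "component t x \<subseteq> explored t"
  unfolding component_def by auto

lemma component_subset_V: "component t x \<subseteq> V"
  using component_subset explored_subset_V by blast

lemma component_refl: "x \<in> explored t \<Longrightarrow> x \<in> component t x"
  unfolding component_def by auto

lemma explored_path_sym: "(x, y) \<in> (explored_edges t)\<^sup>* \<Longrightarrow> (y, x) \<in> (explored_edges t)\<^sup>*"
proof -
  have "sym (explored_edges t)"
    unfolding sym_def using sym_E by auto
  then show "(x, y) \<in> (explored_edges t)\<^sup>* \<Longrightarrow> (y, x) \<in> (explored_edges t)\<^sup>*"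
    using sym_rtrancl unfolding sym_def by blast
qed

lemma component_eq: "y \<in> component t x \<Longrightarrow> component t y = component t x"
  unfolding component_def using explored_path_sym by (auto intro: rtrancl_trans)

lemma component_eqI: "z \<in> component t x \<Longrightarrow> z \<in> component t y \<Longrightarrow> component t x = component t y"
  using component_eq by metis

lemma component_disjoint:
  "C1 = component t a \<Longrightarrow> C2 = component t b \<Longrightarrow> C1 \<noteq> C2 \<Longrightarrow> C1 \<inter> C2 = {}"
  using component_eqI by blast

lemma component_adjacent:
  "y \<in> component t x \<Longrightarrow> z \<in> explored t \<Longrightarrow> (y, z) \<in> E \<Longrightarrow> z \<in> component t x"
  unfolding component_def by (auto intro: rtrancl_into_rtrancl)

lemma component_mono: "t \<le> t' \<Longrightarrow> y \<in> component t x \<Longrightarrow> y \<in> component t' x"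
  unfolding component_def
  using explored_mono[of t t'] rtrancl_mono[of "explored_edges t" "explored_edges t'"] by blast

lemma nball_subset_component:
  assumes "S \<subseteq> presented t" "S \<subseteq> component t x" "r \<le> R"
  shows "nball E S r \<subseteq> component t x"
  using assms(3)
proof (induction r)
  case (Suc r)
  have "nball E S (Suc r) \<subseteq> explored t"
    unfolding explored_def using nball_mono[OF assms(1)] nball_mono_radius[OF Suc.prems] by blast
  show ?case
  proof
    fix z
    assume z: "z \<in> nball E S (Suc r)"
    show "z \<in> component t x"
    proof (cases "z \<in> nball E S r")
      case False
      then obtain u where "u \<in> nball E S r" "(u, z) \<in> E"
        using z by auto
      moreover have "nball E S r \<subseteq> component t x"
        using Suc by simp
      ultimately show ?thesis
        using \<open>nball E S (Suc r) \<subseteq> explored t\<close> z component_adjacent by blast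
    qed (use Suc in auto)
  qed
qed (use assms(2) in simp)

lemma component_presented:
  assumes "y \<in> explored t"
  shows "\<exists>p\<in>presented t. component t y = component t p"
proof -
  obtain p where p: "p \<in> presented t" "y \<in> nball E {p} R"
    using assms nball_singleton_cover unfolding explored_def by blast
  then have "nball E {p} R \<subseteq> component t p"
    using nball_subset_component[of "{p}" t p R] component_refl presented_subset_explored by auto
  then show ?thesis
    using p component_eq by blast
qed

lemma component_path:
  assumes "(x, u) \<in> (explored_edges t)\<^sup>*"
  shows "(x, u) \<in> (E \<inter> (component t x \<times> component t x))\<^sup>*"
  using assms
proof (induction rule: rtrancl_induct)
  case (step y z)
  then have "y \<in> component t x" "z \<in> component t x"
    unfolding component_def by (auto intro: rtrancl_into_rtrancl)
  with step show ?case
    by (auto intro: rtrancl_into_rtrancl)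
qed simp

lemma connected_component:
  assumes "x \<in> explored t"
  shows "connected_graph (component t x) (E \<inter> (component t x \<times> component t x))"
  unfolding connected_graph_def
proof (intro ballI)
  let ?F = "E \<inter> (component t x \<times> component t x)"
  fix u v
  assume "u \<in> component t x" "v \<in> component t x"
  then have "(x, u) \<in> ?F\<^sup>*" "(x, v) \<in> ?F\<^sup>*"
    using component_path unfolding component_def by auto
  moreover have "sym (?F\<^sup>*)"
    by (rule sym_rtrancl) (auto simp: sym_def intro: sym_E)
  ultimately have "(u, x) \<in> ?F\<^sup>*" "(x, v) \<in> ?F\<^sup>*"
    unfolding sym_def by blast+
  then have "(u, v) \<in> ?F\<^sup>*"
    by (rule rtrancl_trans)
  then show "(u, v) \<in> (?F \<union> ?F\<inverse>)\<^sup>*"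
    by (rule rtrancl_mono[THEN subsetD, rotated]) blast
qed

lemma presented_step:
  assumes "1 \<le> t" "t \<le> n"
  shows "presented t = insert (node t) (presented (t - 1))"
proof -
  have "take t \<sigma> = take (t - 1) \<sigma> @ [\<sigma> ! (t - 1)]"
    using assms take_Suc_conv_app_nth[of "t - 1" \<sigma>] by simp
  then show ?thesis
    unfolding presented_def node_def by auto
qed

lemma node_presented: "1 \<le> t \<Longrightarrow> t \<le> n \<Longrightarrow> node t \<in> presented t"
  using presented_step by auto

lemma node_explored: "1 \<le> t \<Longrightarrow> t \<le> n \<Longrightarrow> node t \<in> explored t"
  using node_presented presented_subset_explored by auto

lemma explored_step:
  assumes "1 \<le> t" "t \<le> n"
  shows "explored t = explored (t - 1) \<union> nball E {node t} R"
  unfolding explored_def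
  using presented_step[OF assms] nball_Un[of E "{node t}" "presented (t - 1)" R] by auto

lemma nball_node_subset:
  assumes "1 \<le> t" "t \<le> n"
  shows "nball E {node t} R \<subseteq> new_component t"
  unfolding new_component_def
  using node_presented[OF assms] component_refl[OF node_explored[OF assms]]
  by (intro nball_subset_component) auto

lemma component_new_component:
  "y \<in> new_component t \<Longrightarrow> component t y = new_component t"
  unfolding new_component_def using component_eq by blast

lemma component_untouched:
  assumes t: "1 \<le> t" "t \<le> n" and y: "y \<in> explored t" "y \<notin> new_component t"
  shows "y \<in> explored (t - 1) \<and> component t y = component (t - 1) y"
proof -
  have old: "component t y \<subseteq> explored (t - 1)"
  proof -
    have "explored t \<subseteq> explored (t - 1) \<union> new_component t"
      using explored_step[OF t] nball_node_subset[OF t] by auto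
    moreover have "component t y \<inter> new_component t = {}"
      using y component_eq component_refl component_new_component by blast
    ultimately show ?thesis
      using component_subset by blast
  qed
  have yi: "y \<in> explored (t - 1)"
    using old component_refl[OF y(1)] by blast
  have "(y, z) \<in> (explored_edges (t - 1))\<^sup>*" if "(y, z) \<in> (explored_edges t)\<^sup>*" for z
    using that
  proof (induction rule: rtrancl_induct)
    case (step a b)
    then have "a \<in> component t y" "b \<in> component t y"
      using y(1) unfolding component_def by (auto intro: rtrancl_into_rtrancl)
    with step old show ?case
      by (auto intro: rtrancl_into_rtrancl)
  qed simp
  then have "component t y \<subseteq> component (t - 1) y"
    using old unfolding component_def by blast
  moreover have "component (t - 1) y \<subseteq> component t y"
    using component_mono[of "t - 1" t] by auto
  ultimately show ?thesis
    using yi by blast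
qed

lemma absorbed_subset:
  assumes "C \<in> absorbed t"
  shows "C \<subseteq> new_component t"
proof -
  obtain y where y: "y \<in> new_component t" "C = component (t - 1) y"
    using assms unfolding absorbed_def by auto
  then show ?thesis
    using component_mono[of "t - 1" t _ y] component_new_component[OF y(1)] by auto
qed

lemma absorbed_component: "C \<in> absorbed t \<Longrightarrow> \<exists>y\<in>explored (t - 1). C = component (t - 1) y"
  unfolding absorbed_def by auto

lemma absorbedI: "y \<in> new_component t \<Longrightarrow> y \<in> explored (t - 1) \<Longrightarrow> component (t - 1) y \<in> absorbed t"
  unfolding absorbed_def by auto

lemma winner_max:
  assumes "absorbed t \<noteq> {}"
  shows "winner t \<in> absorbed t \<and>
    (\<forall>C\<in>absorbed t. presented_count (t - 1) C \<le> presented_count (t - 1) (winner t))"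
proof -
  let ?f = "presented_count (t - 1)"
  have "finite (?f ` absorbed t)"
    unfolding absorbed_def using finite_explored by auto
  then obtain C where "C \<in> absorbed t" "?f C = Max (?f ` absorbed t)"
    using Max_in assms by (metis (no_types, lifting) empty_is_image imageE)
  then have "C \<in> absorbed t \<and> (\<forall>C'\<in>absorbed t. ?f C' \<le> ?f C)"
    using \<open>finite (?f ` absorbed t)\<close> by auto
  then show ?thesis
    unfolding winner_def by (rule someI)
qed

section \<open>The base colouring\<close>

lemma unique_colouring:
  assumes "x \<in> explored t"
    and "proper_on (nball E (component t x) l) c" "proper_on (nball E (component t x) l) c'"
  shows "\<exists>\<phi>. bij_betw \<phi> {1..k} {1..k} \<and> (\<forall>v\<in>component t x. c' v = \<phi> (c v))"
proof -
  let ?C = "component t x"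
  have "?C \<subseteq> V \<and> E \<inter> (?C \<times> ?C) \<subseteq> E \<inter> (?C \<times> ?C) \<and> connected_graph ?C (E \<inter> (?C \<times> ?C))"
    using component_subset_V connected_component[OF assms(1)] by blast
  then show ?thesis
    using in_L assms(2,3) unfolding in_L_def by blast
qed

lemma nball_component_subset_V: "nball E (component t x) l \<subseteq> V"
  using nball_subset[OF E_subset component_subset_V] .

lemma nball_new_component_subset_V: "nball E (new_component t) l \<subseteq> V"
  unfolding new_component_def by (rule nball_component_subset_V)

text \<open>This invariant is what makes membership in \<open>L\<^sub>k\<^sub>,\<^sub>l\<close> applicable to the base colouring.\<close>

definition base_extends :: "nat \<Rightarrow> nat \<Rightarrow> bool" where
  "base_extends t x \<longleftrightarrow>
     (\<exists>c. proper_on (nball E (component t x) l) c \<and> (\<forall>y\<in>component t x. c y = base_colour t y))"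

lemma new_colouring_exists:
  assumes inv: "\<And>x. x \<in> explored (t - 1) \<Longrightarrow> base_extends (t - 1) x"
  shows "\<exists>c. proper_on (nball E (new_component t) l) c \<and>
    (absorbed t \<noteq> {} \<longrightarrow> (\<forall>y\<in>winner t. c y = base_colour (t - 1) y))"
proof -
  obtain \<chi> where \<chi>: "proper_coloring k V E \<chi>"
    using in_L unfolding in_L_def k_partite_def by auto
  have id: "bij_betw id {1..k} {1..k}"
    by simp
  show ?thesis
  proof (cases "absorbed t = {}")
    case True
    then show ?thesis
      using proper_coloring_permute[OF \<chi> id nball_new_component_subset_V] by blast
  next
    case False
    then obtain y where y: "y \<in> explored (t - 1)" "winner t = component (t - 1) y"
      using winner_max absorbed_component by blast
    obtain c where c: "proper_on (nball E (component (t - 1) y) l) c"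
      "\<forall>z\<in>component (t - 1) y. c z = base_colour (t - 1) z"
      using inv[OF y(1)] unfolding base_extends_def by blast
    obtain \<phi> where \<phi>: "bij_betw \<phi> {1..k} {1..k}" "\<forall>v\<in>component (t - 1) y. c v = \<phi> ((id \<circ> \<chi>) v)"
      using unique_colouring[OF y(1) proper_coloring_permute[OF \<chi> id nball_component_subset_V] c(1)]
      by blast
    then have "\<forall>z\<in>winner t. (\<phi> \<circ> \<chi>) z = base_colour (t - 1) z"
      using c(2) y(2) by simp
    then show ?thesis
      using proper_coloring_permute[OF \<chi> \<phi>(1) nball_new_component_subset_V] by blast
  qed
qed

lemma new_colouring_props:
  assumes "\<And>x. x \<in> explored (t - 1) \<Longrightarrow> base_extends (t - 1) x"
  shows "proper_on (nball E (new_component t) l) (new_colouring t) \<and>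
    (absorbed t \<noteq> {} \<longrightarrow> (\<forall>y\<in>winner t. new_colouring t y = base_colour (t - 1) y))"
  unfolding new_colouring_def by (rule someI_ex[OF new_colouring_exists[OF assms]])

lemma base_extends_invariant: "t \<le> n \<Longrightarrow> x \<in> explored t \<Longrightarrow> base_extends t x"
proof (induction t arbitrary: x)
  case 0
  then show ?case
    using explored_0 by simp
next
  case (Suc t)
  have t: "1 \<le> Suc t" "Suc t \<le> n"
    using Suc.prems by auto
  have new: "proper_on (nball E (new_component (Suc t)) l) (new_colouring (Suc t))"
    using new_colouring_props[of "Suc t"] Suc by simp
  show ?case
  proof (cases "x \<in> new_component (Suc t)")
    case True
    then show ?thesis
      using new component_new_component[OF True] unfolding base_extends_def base_colour_Suc by auto
  next
    case False
    then have x: "x \<in> explored t" "component (Suc t) x = component t x"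
      using component_untouched[OF t Suc.prems(2)] by auto
    have "y \<notin> new_component (Suc t)" if "y \<in> component t x" for y
      using that x(2) False component_eq component_new_component component_refl[OF Suc.prems(2)]
      by metis
    then have "\<forall>y\<in>component t x. base_colour (Suc t) y = base_colour t y"
      using base_colour_Suc by simp
    then show ?thesis
      using Suc.IH[OF _ x(1)] Suc.prems x(2) unfolding base_extends_def by auto
  qed
qed

lemma new_colouring_proper:
  "1 \<le> t \<Longrightarrow> t \<le> n \<Longrightarrow> proper_on (nball E (new_component t) l) (new_colouring t)"
  using new_colouring_props base_extends_invariant by simp

lemma new_colouring_winner:
  "1 \<le> t \<Longrightarrow> t \<le> n \<Longrightarrow> absorbed t \<noteq> {} \<Longrightarrow> y \<in> winner t \<Longrightarrow>
    new_colouring t y = base_colour (t - 1) y"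
  using new_colouring_props base_extends_invariant by simp

lemma base_colour_range: "t \<le> n \<Longrightarrow> x \<in> explored t \<Longrightarrow> base_colour t x \<in> {1..k}"
  using base_extends_invariant[of t x] component_refl[of x t] subset_nball[of "component t x" E l]
  unfolding base_extends_def proper_coloring_def by fastforce

lemma base_colour_proper:
  assumes "t \<le> n" "x \<in> explored t" "y \<in> component t x" "(x, y) \<in> E"
  shows "base_colour t x \<noteq> base_colour t y"
proof -
  obtain c where c: "proper_on (nball E (component t x) l) c"
    "\<forall>y\<in>component t x. c y = base_colour t y"
    using base_extends_invariant[OF assms(1,2)] unfolding base_extends_def by blast
  have "x \<in> component t x"
    using component_refl assms(2) by blast
  then have "(x, y) \<in> induced_edges E (nball E (component t x) l)"
    using assms(3,4) subset_nball[of "component t x" E l] unfolding induced_edges_def by auto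
  then show ?thesis
    using c \<open>x \<in> component t x\<close> assms(3) unfolding proper_coloring_def by auto
qed

lemma base_colour_winner:
  assumes t: "1 \<le> t" "t \<le> n" and y: "y \<in> explored (t - 1)"
    and not_loser: "component (t - 1) y \<notin> losers t"
  shows "base_colour t y = base_colour (t - 1) y"
proof (cases "y \<in> new_component t")
  case True
  then have "component (t - 1) y = winner t" "absorbed t \<noteq> {}"
    using absorbedI[OF True y] not_loser unfolding losers_def by auto
  then have "new_colouring t y = base_colour (t - 1) y"
    using new_colouring_winner[OF t] component_refl[OF y] by auto
  then show ?thesis
    using base_colour_Suc[of "t - 1"] t True by simp
qed (use base_colour_Suc[of "t - 1"] t in simp)

lemma loses_absorbed: "loses t L \<Longrightarrow> L \<in> absorbed t"
  unfolding loses_def losers_def by auto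

lemma loses_component: "loses t L \<Longrightarrow> \<exists>y\<in>explored (t - 1). L = component (t - 1) y"
  using absorbed_component loses_absorbed by blast

lemma loses_subset: "loses t L \<Longrightarrow> L \<subseteq> new_component t"
  using absorbed_subset loses_absorbed by blast

lemma seeds_subset: "seeds t L \<subseteq> L" "seeds t L \<subseteq> presented (t - 1)"
  unfolding seeds_def by auto

lemma finite_seeds: "finite (seeds t L)"
  using seeds_subset(2) finite_presented by (rule finite_subset)

lemma seeds_nonempty:
  assumes "loses t L"
  shows "seeds t L \<noteq> {}"
proof -
  obtain y where y: "y \<in> explored (t - 1)" "L = component (t - 1) y"
    using loses_component[OF assms] by blast
  obtain p where p: "p \<in> presented (t - 1)" "component (t - 1) y = component (t - 1) p"
    using component_presented[OF y(1)] by blast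
  then have "p \<in> L"
    using component_refl presented_subset_explored y(2) by blast
  then show ?thesis
    unfolding seeds_def using p(1) by auto
qed

lemma zone_radius_le: "zone_radius t L \<le> R"
proof -
  have "card (seeds t L) \<le> card V"
    using seeds_subset presented_subset_V finite_V by (meson card_mono order_trans)
  then show ?thesis
    unfolding zone_radius_def using zone_width_mono radius le_trans by blast
qed

lemma nball_seeds_subset:
  assumes "loses t L" "r \<le> R"
  shows "nball E (seeds t L) r \<subseteq> L"
proof -
  obtain y where "L = component (t - 1) y"
    using loses_component[OF assms(1)] by blast
  then show ?thesis
    using nball_subset_component[of "seeds t L" "t - 1" y r] seeds_subset assms(2) by auto
qed

lemma nball_zone_radius_subset: "loses t L \<Longrightarrow> nball E (seeds t L) (zone_radius t L) \<subseteq> L"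
  using nball_seeds_subset zone_radius_le by blast

lemma transition_perm_props:
  assumes L: "loses t L" and t: "t \<le> n"
  shows "bij_betw (transition_perm t L) {1..k} {1..k} \<and>
    (\<forall>x\<in>L. base_colour t x = transition_perm t L (base_colour (t - 1) x))"
proof -
  have t1: "1 \<le> t"
    using L unfolding loses_def by simp
  obtain y where y: "y \<in> explored (t - 1)" "L = component (t - 1) y"
    using loses_component[OF L] by blast
  have "base_extends (t - 1) y"
    using base_extends_invariant y(1) t by simp
  then obtain c where c: "proper_on (nball E L l) c" "\<forall>z\<in>L. c z = base_colour (t - 1) z"
    unfolding base_extends_def y(2)[symmetric] by blast
  have "proper_on (nball E L l) (new_colouring t)"
    using proper_coloring_subset[OF new_colouring_proper[OF t1 t]] nball_mono[OF loses_subset[OF L]]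
    by blast
  then obtain \<phi> where \<phi>: "bij_betw \<phi> {1..k} {1..k}" "\<forall>v\<in>L. new_colouring t v = \<phi> (c v)"
    using unique_colouring[OF y(1)] c(1) y(2) by blast
  have "base_colour t x = new_colouring t x" if "x \<in> L" for x
    using base_colour_Suc[of "t - 1" x] loses_subset[OF L] that t1 by auto
  then have "\<exists>\<pi>. bij_betw \<pi> {1..k} {1..k} \<and> (\<forall>x\<in>L. base_colour t x = \<pi> (base_colour (t - 1) x))"
    using \<phi> c(2) by auto
  then show ?thesis
    unfolding transition_perm_def by (rule someI_ex)
qed

lemma zone_ball_subset_component:
  assumes L: "loses t1 L" and s: "s \<in> seeds t1 L" and t: "t1 \<le> t2"
  shows "nball E (seeds t1 L) (zone_radius t1 L) \<subseteq> component (t2 - 1) s"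
proof (rule nball_subset_component[OF _ _ zone_radius_le])
  have "L = component (t1 - 1) s"
    using s seeds_subset(1) loses_component[OF L] component_eq by blast
  then show "seeds t1 L \<subseteq> component (t2 - 1) s"
    using seeds_subset(1)[of t1 L] component_mono[of "t1 - 1" "t2 - 1" _ s] t by auto
  show "seeds t1 L \<subseteq> presented (t2 - 1)"
    using seeds_subset(2)[of t1 L] presented_mono[of "t1 - 1" "t2 - 1"] t
    by (simp add: diff_le_mono)
qed

text \<open>The zone balls of two losers can only touch if the later loser contains the whole merged
  component of the earlier one: the earlier zone ball stays inside the component of its seeds.\<close>

lemma zones_nested:
  assumes L1: "loses t1 L1" and L2: "loses t2 L2" and t: "t1 \<le> t2" and ne: "(t1, L1) \<noteq> (t2, L2)"
    and x: "x \<in> nball E (seeds t1 L1) (zone_radius t1 L1)"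
    and y: "y \<in> nball E (seeds t2 L2) (zone_radius t2 L2)"
    and xy: "x = y \<or> (x, y) \<in> E"
  shows "t1 < t2 \<and> new_component t1 \<subseteq> L2"
proof -
  obtain s where s: "s \<in> seeds t1 L1"
    using seeds_nonempty[OF L1] by blast
  then have sL1: "s \<in> L1" "L1 = component (t1 - 1) s"
    using seeds_subset(1) loses_component[OF L1] component_eq by blast+
  have xC: "x \<in> component (t2 - 1) s"
    using zone_ball_subset_component[OF L1 s t] x by blast
  obtain y2 where y2: "L2 = component (t2 - 1) y2"
    using loses_component[OF L2] by blast
  have yL2: "y \<in> L2"
    using nball_zone_radius_subset[OF L2] y by blast
  moreover have "y \<in> explored (t2 - 1)"
    using yL2 y2 component_subset by blast
  ultimately have "y \<in> component (t2 - 1) s"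
    using xy xC component_adjacent[of x "t2 - 1" s y] by blast
  then have C: "component (t2 - 1) s = L2"
    using yL2 y2 component_eqI by metis
  have lt: "t1 < t2"
  proof (rule ccontr)
    assume "\<not> t1 < t2"
    then have "t1 = t2"
      using t by simp
    then show False
      using C sL1(2) ne by simp
  qed
  have "new_component t1 = component t1 s"
    using component_new_component sL1(1) loses_subset[OF L1] by blast
  also have "\<dots> \<subseteq> L2"
    unfolding C[symmetric] using component_mono[of t1 "t2 - 1"] lt by auto
  finally show ?thesis
    using lt by simp
qed

text \<open>A loser has at most as many presented nodes as the winner, so a later loser containing the
  merged component has at least twice as many.\<close>

lemma zone_radius_doubles:
  assumes L1: "loses t1 L1" and t: "t1 < t2" and sub: "new_component t1 \<subseteq> L2"
  shows "seeds t1 L1 \<subseteq> seeds t2 L2 \<and> zone_radius t1 L1 + (3 * k + 1) \<le> zone_radius t2 L2"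
proof -
  let ?W = "winner t1 \<inter> presented (t1 - 1)"
  have P: "presented (t1 - 1) \<subseteq> presented (t2 - 1)"
    using presented_mono t by (simp add: diff_le_mono)
  have seeds: "seeds t1 L1 \<subseteq> seeds t2 L2"
    unfolding seeds_def using loses_subset[OF L1] sub P by blast
  have absorbed: "L1 \<in> absorbed t1" "L1 \<noteq> winner t1"
    using L1 unfolding loses_def losers_def by auto
  then have W: "winner t1 \<in> absorbed t1"
    "presented_count (t1 - 1) L1 \<le> presented_count (t1 - 1) (winner t1)"
    using winner_max by blast+
  obtain a b where "L1 = component (t1 - 1) a" "winner t1 = component (t1 - 1) b"
    using absorbed_component absorbed(1) W(1) by metis
  then have "L1 \<inter> winner t1 = {}"
    using component_disjoint absorbed(2) by blast
  then have "seeds t1 L1 \<inter> ?W = {}"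
    unfolding seeds_def by blast
  then have "card (seeds t1 L1) + card ?W = card (seeds t1 L1 \<union> ?W)"
    using finite_seeds finite_presented[of "t1 - 1"] by (simp add: card_Un_disjoint)
  also have "\<dots> \<le> card (seeds t2 L2)"
  proof (rule card_mono[OF finite_seeds])
    show "seeds t1 L1 \<union> ?W \<subseteq> seeds t2 L2"
      using seeds absorbed_subset[OF W(1)] sub P unfolding seeds_def by blast
  qed
  finally have "2 * card (seeds t1 L1) \<le> card (seeds t2 L2)"
    using W(2) unfolding presented_count_def seeds_def by simp
  moreover have "1 \<le> card (seeds t1 L1)"
    using seeds_nonempty[OF L1] finite_seeds by (simp add: Suc_le_eq card_gt_0_iff)
  ultimately show ?thesis
    using seeds zone_width_double unfolding zone_radius_def by blast
qed

lemma label_Suc: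
  assumes x: "x \<in> presented t" and t: "Suc t \<le> n"
  shows "label (Suc t) x = label t x"
proof (cases "in_zone t x")
  case True
  then show ?thesis
    using zone_time_Suc[OF True] unfolding label_def by simp
next
  case not_in_zone: False
  have seed: "x \<in> seeds (Suc t) L" if "x \<in> L" for L
    unfolding seeds_def using x that by simp
  show ?thesis
  proof (cases "in_zone (Suc t) x")
    case True
    let ?L = "zone_loser (Suc t) x"
    have time: "zone_time (Suc t) x = Suc t"
      using zone_time_new[OF True not_in_zone] .
    then have L: "loses (Suc t) ?L" "x \<in> zone (Suc t) ?L"
      using zone_time_props[OF True] by auto
    then have "x \<in> ?L"
      using zone_subset_nball nball_zone_radius_subset by blast
    then have "zone_colour (Suc t) ?L x = base_colour t x"
      using zone_colour_seed[OF seed] by simp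
    then show ?thesis
      using True not_in_zone time unfolding label_def by simp
  next
    case False
    have xi: "x \<in> explored t"
      using x presented_subset_explored by blast
    have "component t x \<notin> losers (Suc t)"
    proof
      assume "component t x \<in> losers (Suc t)"
      then have "loses (Suc t) (component t x)"
        unfolding loses_def by simp
      then show False
        using False seeds_in_zone[OF seed] component_refl[OF xi] unfolding in_zone_def by blast
    qed
    then have "base_colour (Suc t) x = base_colour t x"
      using base_colour_winner[of "Suc t"] t xi by simp
    then show ?thesis
      using not_in_zone False unfolding label_def by simp
  qed
qed

lemma label_stable:
  assumes "x \<in> presented t0" "t0 \<le> t" "t \<le> n"
  shows "label t x = label t0 x"
  using assms(2,3)
proof (induction t rule: dec_induct)
  case (step t)
  then show ?case
    using label_Suc[of x t] presented_mono[of t0 t] assms(1) by auto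
qed simp

section \<open>Properness of the labels\<close>

text \<open>A node near the zone of a loser that lies in no later zone keeps its base colour: had its
  component lost later, the (wider) later zone would have contained it.\<close>

lemma base_colour_stable:
  assumes L: "loses te Le" and t: "te \<le> t" "t \<le> n" and y: "y \<in> new_component te"
    and y_near: "y \<in> nball E (seeds te Le) (zone_radius te Le)"
    and no_zone: "\<And>t' L. te < t' \<Longrightarrow> t' \<le> t \<Longrightarrow> loses t' L \<Longrightarrow> y \<notin> zone t' L"
  shows "base_colour t y = base_colour te y"
  using t
proof (induction t rule: dec_induct)
  case (step m)
  have y_explored: "y \<in> explored m"
    using y component_subset explored_mono[OF step(1)] unfolding new_component_def by blast
  have "component m y \<notin> losers (Suc m)"
  proof
    assume "component m y \<in> losers (Suc m)"
    then have lost: "loses (Suc m) (component m y)"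
      unfolding loses_def by simp
    have "new_component te \<subseteq> component m y"
      using component_new_component[OF y] component_mono[OF step(1)] by blast
    then have d: "seeds te Le \<subseteq> seeds (Suc m) (component m y)"
        "zone_radius te Le + (3 * k + 1) \<le> zone_radius (Suc m) (component m y)"
      using zone_radius_doubles[OF L] step(1) by simp_all
    have "y \<in> nball E (seeds (Suc m) (component m y)) (zone_radius te Le)"
      using y_near nball_mono[OF d(1)] by blast
    moreover have "zone_radius te Le \<le> zone_radius (Suc m) (component m y) - 1"
      using d(2) by linarith
    ultimately have "y \<in> zone (Suc m) (component m y)"
      unfolding zone_def using nball_mono_radius by blast
    then show False
      using no_zone[OF _ _ lost] step by simp
  qed
  then show ?case
    using base_colour_winner[of "Suc m" y] y_explored step by simp
qed simp

lemma level_adjacent: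
  "(a::nat) \<le> Suc b \<Longrightarrow> b \<le> Suc a \<Longrightarrow>
    b + c - d = a + c - d \<or> b + c - d = Suc (a + c - d) \<or> a + c - d = Suc (b + c - d)"
  by arith

lemma set_dist_adjacent_sym:
  assumes "x \<in> nball E S r" "(x, y) \<in> E"
  shows "set_dist E S y \<le> Suc (set_dist E S x) \<and> set_dist E S x \<le> Suc (set_dist E S y)"
  using set_dist_adjacent[OF assms] set_dist_adjacent(2)[OF _ sym_E[OF assms(2)]] by blast

lemma zone_ball_facts:
  assumes L: "loses te Le" and te: "te \<le> n" and x: "x \<in> nball E (seeds te Le) (zone_radius te Le)"
  shows "x \<in> Le \<and> x \<in> explored (te - 1) \<and> base_colour (te - 1) x \<in> {1..k}"
proof -
  have "x \<in> Le"
    using nball_zone_radius_subset[OF L] x by blast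
  moreover then have "x \<in> explored (te - 1)"
    using loses_component[OF L] component_subset by blast
  ultimately show ?thesis
    using te base_colour_range[of "te - 1" x] by simp
qed

lemma base_colour_proper_zone_ball:
  assumes L: "loses te Le" and te: "te \<le> n"
    and x: "x \<in> nball E (seeds te Le) (zone_radius te Le)"
    and y: "y \<in> nball E (seeds te Le) (zone_radius te Le)" and xy: "(x, y) \<in> E"
  shows "base_colour (te - 1) x \<noteq> base_colour (te - 1) y"
proof -
  have xL: "x \<in> Le" "x \<in> explored (te - 1)" and yL: "y \<in> Le"
    using zone_ball_facts[OF L te x] zone_ball_facts[OF L te y] by auto
  then have "y \<in> component (te - 1) x"
    using loses_component[OF L] component_eq by metis
  then show ?thesis
    using base_colour_proper[OF _ xL(2) _ xy] te by simp
qed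

lemma zone_colour_proper:
  assumes L: "loses te Le" and te: "te \<le> n" and x: "x \<in> zone te Le" and y: "y \<in> zone te Le"
    and xy: "(x, y) \<in> E"
  shows "zone_colour te Le x \<noteq> zone_colour te Le y"
proof -
  let ?d = "set_dist E (seeds te Le)"
  have xb: "x \<in> nball E (seeds te Le) (zone_radius te Le)"
    and yb: "y \<in> nball E (seeds te Le) (zone_radius te Le)"
    using x y zone_subset_nball by blast+
  have \<pi>: "bij_betw (transition_perm te Le) {1..k} {1..k}"
    using transition_perm_props[OF L te] by blast
  have "?d y + (3 * k + 1) - zone_radius te Le = ?d x + (3 * k + 1) - zone_radius te Le \<or>
      ?d y + (3 * k + 1) - zone_radius te Le = Suc (?d x + (3 * k + 1) - zone_radius te Le) \<or>
      ?d x + (3 * k + 1) - zone_radius te Le = Suc (?d y + (3 * k + 1) - zone_radius te Le)"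
    using set_dist_adjacent_sym[OF xb xy] level_adjacent by blast
  then show ?thesis
    unfolding zone_colour_def
    using relabel_path_distinct[OF \<pi>] base_colour_proper_zone_ball[OF L te xb yb xy]
      zone_ball_facts[OF L te xb] zone_ball_facts[OF L te yb]
    by blast
qed

text \<open>Across the outer boundary of a zone the relabelling is complete: the inside is coloured by
  the last recolouring step before \<open>\<pi>\<close>, the outside by the new base colouring.\<close>

lemma zone_boundary:
  assumes L: "loses te Le" and te: "te \<le> n" and x: "x \<in> zone te Le" and y: "y \<notin> zone te Le"
    and xy: "(x, y) \<in> E"
  shows "zone_colour te Le x \<noteq> base_colour te y \<and> y \<in> nball E (seeds te Le) (zone_radius te Le)"
proof -
  let ?S = "seeds te Le" and ?r = "zone_radius te Le"
  have xb: "x \<in> nball E ?S ?r"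
    using x zone_subset_nball by blast
  have dx: "set_dist E ?S x < ?r"
    using set_dist_zone[OF x] .
  have yb: "y \<in> nball E ?S ?r"
    using set_dist_adjacent(1)[OF xb xy] nball_mono_radius[of "Suc (set_dist E ?S x)" ?r E ?S] dx
    by auto
  have "?r \<le> set_dist E ?S y"
    using in_zone_iff[OF yb] y by simp
  then have level: "set_dist E ?S x + (3 * k + 1) - ?r = 3 * k"
    using set_dist_adjacent_sym[OF xb xy] dx by simp
  have \<pi>: "bij_betw (transition_perm te Le) {1..k} {1..k}"
    and new: "\<forall>z\<in>Le. base_colour te z = transition_perm te Le (base_colour (te - 1) z)"
    using transition_perm_props[OF L te] by auto
  have range: "base_colour (te - 1) x \<in> {1..k}" "base_colour (te - 1) y \<in> {1..k}" "y \<in> Le"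
    using zone_ball_facts[OF L te xb] zone_ball_facts[OF L te yb] by auto
  let ?path = "relabel_path k (transition_perm te Le)"
  have "base_colour te y = ?path (Suc (3 * k)) (base_colour (te - 1) y)"
    using new range relabel_path_end[OF \<pi> _ range(2), of "Suc (3 * k)"] by simp
  moreover have "zone_colour te Le x = ?path (3 * k) (base_colour (te - 1) x)"
    unfolding zone_colour_def using level by simp
  ultimately show ?thesis
    using relabel_path_distinct[OF \<pi> range(1,2) base_colour_proper_zone_ball[OF L te xb yb xy]] yb
    by simp
qed

lemma label_no_zone:
  assumes L: "loses te Le" and t: "te \<le> t" "t \<le> n" and x: "x \<in> zone te Le" and xy: "(x, y) \<in> E"
    and no_zone: "\<not> in_zone t y"
  shows "label t y = base_colour te y"
proof -
  have "y \<notin> zone te Le"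
    using no_zone L t unfolding in_zone_def by blast
  then have y_near: "y \<in> nball E (seeds te Le) (zone_radius te Le)"
    using zone_boundary[OF L _ x _ xy] t by simp
  then have "y \<in> new_component te"
    using zone_ball_facts[OF L] loses_subset[OF L] t by auto
  then have "base_colour t y = base_colour te y"
    using base_colour_stable[OF L t _ y_near] no_zone unfolding in_zone_def by blast
  then show ?thesis
    unfolding label_def using no_zone by simp
qed

lemma label_nested_zone:
  assumes L: "loses te Le" and t: "te \<le> t" "t \<le> n" and x: "x \<in> zone te Le" and xy: "(x, y) \<in> E"
    and y: "y \<notin> zone te Le" "in_zone t y" and later: "te < zone_time t y"
    and sub: "new_component te \<subseteq> zone_loser t y"
  shows "label t y = base_colour te y"
proof -
  let ?tf = "zone_time t y" and ?Lf = "zone_loser t y"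
  have f: "?tf \<le> t" "loses ?tf ?Lf"
    using zone_time_props[OF y(2)] by auto
  have y_near: "y \<in> nball E (seeds te Le) (zone_radius te Le)"
    using zone_boundary[OF L _ x y(1) xy] t by simp
  have d: "seeds te Le \<subseteq> seeds ?tf ?Lf" "zone_radius te Le + (3 * k + 1) \<le> zone_radius ?tf ?Lf"
    using zone_radius_doubles[OF L later sub] by auto
  have "set_dist E (seeds ?tf ?Lf) y \<le> zone_radius te Le"
    using set_dist_antimono[OF d(1) y_near] set_dist_le[OF y_near] by linarith
  then have "zone_colour ?tf ?Lf y = base_colour (?tf - 1) y"
    using d(2) by (intro zone_colour_inner) simp
  moreover have "base_colour (?tf - 1) y = base_colour te y"
  proof (rule base_colour_stable[OF L _ _ _ y_near])
    show "te \<le> ?tf - 1" "?tf - 1 \<le> n"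
      using later f(1) t by auto
    show "y \<in> new_component te"
      using zone_ball_facts[OF L _ y_near] loses_subset[OF L] t by auto
    show "y \<notin> zone t' L" if "te < t'" "t' \<le> ?tf - 1" "loses t' L" for t' L
      using zone_time_least[OF y(2)] that by simp
  qed
  ultimately show ?thesis
    unfolding label_def using y(2) by simp
qed

lemma label_proper_one_zone:
  assumes t: "t \<le> n" and x: "in_zone t x" and y: "\<not> in_zone t y" and xy: "(x, y) \<in> E"
  shows "label t x \<noteq> label t y"
proof -
  let ?te = "zone_time t x" and ?Le = "zone_loser t x"
  have e: "?te \<le> t" "loses ?te ?Le" "x \<in> zone ?te ?Le"
    using zone_time_props[OF x] by auto
  have "y \<notin> zone ?te ?Le"
    using y e unfolding in_zone_def by blast
  then have "zone_colour ?te ?Le x \<noteq> base_colour ?te y"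
    using zone_boundary[OF e(2) _ e(3) _ xy] e t by simp
  moreover have "label t y = base_colour ?te y"
    using label_no_zone[OF e(2) e(1) t e(3) xy y] .
  ultimately show ?thesis
    unfolding label_def using x by simp
qed

lemma label_proper_two_zones:
  assumes t: "t \<le> n" and x: "in_zone t x" and y: "in_zone t y" and xy: "(x, y) \<in> E"
    and le: "zone_time t x \<le> zone_time t y"
    and ne: "(zone_time t x, zone_loser t x) \<noteq> (zone_time t y, zone_loser t y)"
  shows "label t x \<noteq> label t y"
proof -
  let ?te = "zone_time t x" and ?Le = "zone_loser t x"
  let ?tf = "zone_time t y" and ?Lf = "zone_loser t y"
  have e: "?te \<le> t" "loses ?te ?Le" "x \<in> zone ?te ?Le"
    using zone_time_props[OF x] by auto
  have f: "loses ?tf ?Lf" "y \<in> zone ?tf ?Lf"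
    using zone_time_props[OF y] by auto
  have nested: "?te < ?tf \<and> new_component ?te \<subseteq> ?Lf"
    using zones_nested[OF e(2) f(1) le ne] e(3) f(2) zone_subset_nball xy by blast
  then have y_out: "y \<notin> zone ?te ?Le"
    using zone_time_least[OF y _ e(2)] by blast
  then have "zone_colour ?te ?Le x \<noteq> base_colour ?te y"
    using zone_boundary[OF e(2) _ e(3) _ xy] e t by simp
  moreover have "label t y = base_colour ?te y"
    using label_nested_zone[OF e(2) e(1) t e(3) xy y_out y] nested by blast
  ultimately show ?thesis
    unfolding label_def using x by simp
qed

lemma label_proper:
  assumes t: "t \<le> n" and x: "x \<in> presented t" and y: "y \<in> presented t" and xy: "(x, y) \<in> E"
  shows "label t x \<noteq> label t y"
proof (cases "in_zone t x"; cases "in_zone t y")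
  assume zx: "in_zone t x" and zy: "in_zone t y"
  show ?thesis
  proof (cases "(zone_time t x, zone_loser t x) = (zone_time t y, zone_loser t y)")
    case True
    have e: "zone_time t x \<le> t" "loses (zone_time t x) (zone_loser t x)"
      "x \<in> zone (zone_time t x) (zone_loser t x)" "y \<in> zone (zone_time t x) (zone_loser t x)"
      using zone_time_props[OF zx] zone_time_props[OF zy] True by auto
    then have "zone_colour (zone_time t x) (zone_loser t x) x \<noteq>
        zone_colour (zone_time t x) (zone_loser t x) y"
      using zone_colour_proper[OF e(2) _ e(3,4) xy] t by simp
    then show ?thesis
      unfolding label_def using zx zy True by simp
  next
    case False
    then show ?thesis
      using label_proper_two_zones[OF t zx zy xy] label_proper_two_zones[OF t zy zx sym_E[OF xy]]
      by (cases "zone_time t x \<le> zone_time t y") auto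
  qed
next
  assume "in_zone t x" "\<not> in_zone t y"
  then show ?thesis
    using label_proper_one_zone t xy by blast
next
  assume "\<not> in_zone t x" "in_zone t y"
  then show ?thesis
    using label_proper_one_zone[OF t _ _ sym_E[OF xy]] by auto
next
  assume "\<not> in_zone t x" "\<not> in_zone t y"
  moreover have "x \<in> explored t" "y \<in> explored t"
    using x y presented_subset_explored by blast+
  moreover then have "y \<in> component t x"
    using component_adjacent[OF component_refl _ xy] by blast
  ultimately show ?thesis
    unfolding label_def using base_colour_proper[OF t _ _ xy] by simp
qed

lemma label_range:
  assumes t: "t \<le> n" and x: "x \<in> presented t"
  shows "label t x \<in> {1..k+1}"
proof (cases "in_zone t x")
  case True
  let ?te = "zone_time t x" and ?Le = "zone_loser t x"
  have e: "?te \<le> n" "loses ?te ?Le" "x \<in> zone ?te ?Le"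
    using zone_time_props[OF True] t by auto
  have "bij_betw (transition_perm ?te ?Le) {1..k} {1..k}"
    using transition_perm_props[OF e(2,1)] by blast
  moreover have "base_colour (?te - 1) x \<in> {1..k}"
    using zone_ball_facts[OF e(2,1)] e(3) zone_subset_nball by blast
  ultimately show ?thesis
    unfolding label_def zone_colour_def using True relabel_path_range by simp
next
  case False
  then show ?thesis
    unfolding label_def using base_colour_range[OF t] x presented_subset_explored[of t] by fastforce
qed

lemma output_colour_label:
  assumes "i < n"
  shows "output_colour (Suc i) = label n (\<sigma> ! i)"
proof -
  have "node (Suc i) = \<sigma> ! i"
    unfolding node_def by simp
  moreover have "\<sigma> ! i \<in> presented (Suc i)"
    using node_presented[of "Suc i"] assms calculation by simp
  ultimately show ?thesis
    unfolding output_colour_def using label_stable[of "\<sigma> ! i" "Suc i" n] assms by simp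
qed

lemma nth_presented: "i < n \<Longrightarrow> \<sigma> ! i \<in> presented n"
  unfolding presented_def by simp

lemma output_colour_range: "i < n \<Longrightarrow> output_colour (Suc i) \<in> {1..k+1}"
  using label_range[OF order_refl nth_presented] output_colour_label by simp

lemma output_colour_proper:
  "i < n \<Longrightarrow> j < n \<Longrightarrow> (\<sigma> ! i, \<sigma> ! j) \<in> E \<Longrightarrow> output_colour (Suc i) \<noteq> output_colour (Suc j)"
  using label_proper[OF order_refl nth_presented nth_presented] output_colour_label by simp

end

section \<open>Locality\<close>

text \<open>The run on what the algorithm sees after \<open>m\<close> presentations: the subgraph induced by the
  ball \<open>W\<close> of radius \<open>R + l\<close> around the first \<open>m\<close> presented nodes, with the prefix of length \<open>m\<close>
  of the presentation order. It agrees with the run on the whole graph up to time \<open>m\<close>.\<close>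

locale online_run_prefix = online_run +
  fixes m :: nat
  assumes m: "m \<le> length \<sigma>" and radius: "zone_width k (length \<sigma>) \<le> R"
begin

definition W :: "nat set" where
  "W = nball E (presented m) (R + l)"

definition F :: "(nat \<times> nat) set" where
  "F = induced_edges E W"

sublocale view: online_run k l R F "take m \<sigma>" .

lemma F_Int: "X \<subseteq> W \<Longrightarrow> F \<inter> (X \<times> X) = E \<inter> (X \<times> X)"
  unfolding F_def induced_edges_def by auto

lemma nball_F: "nball E U r \<subseteq> W \<Longrightarrow> nball F U r = nball E U r"
  unfolding F_def induced_edges_def by (rule nball_restrict_edges)

lemma nball_subset_W: "t \<le> m \<Longrightarrow> r \<le> R + l \<Longrightarrow> U \<subseteq> presented t \<Longrightarrow> nball E U r \<subseteq> W"
  unfolding W_def presented_def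
  using nball_mono nball_mono_radius set_take_subset_set_take by (meson order_trans)

lemma explored_subset_W: "t \<le> m \<Longrightarrow> explored t \<subseteq> W"
  unfolding explored_def using nball_subset_W by simp

lemma nball_new_component_subset_W: "t \<le> m \<Longrightarrow> nball E (new_component t) l \<subseteq> W"
proof -
  assume t: "t \<le> m"
  have "new_component t \<subseteq> explored t"
    unfolding new_component_def component_def by auto
  then have "nball E (new_component t) l \<subseteq> nball E (explored t) l"
    by (rule nball_mono)
  also have "\<dots> = nball E (presented t) (R + l)"
    unfolding explored_def by (rule nball_nball)
  also have "\<dots> \<subseteq> W"
    using nball_subset_W[OF t] by simp
  finally show ?thesis .
qed

lemma zone_radius_le_R: "zone_radius t L \<le> R"
proof -
  have "card (seeds t L) \<le> card (presented (t - 1))"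
    unfolding seeds_def presented_def by (intro card_mono) auto
  also have "\<dots> \<le> length \<sigma>"
    unfolding presented_def by (metis card_length length_take min.bounded_iff order_refl)
  finally show ?thesis
    unfolding zone_radius_def using zone_width_mono radius le_trans by blast
qed

lemma nball_seeds_subset_W: "t \<le> m \<Longrightarrow> r \<le> R \<Longrightarrow> nball E (seeds t L) r \<subseteq> W"
  using nball_subset_W[of "t - 1" r "seeds t L"] unfolding seeds_def by auto

lemma local_presented: "t \<le> m \<Longrightarrow> view.presented t = presented t"
  unfolding view.presented_def presented_def by (simp add: min_absorb1)

lemma local_explored: "t \<le> m \<Longrightarrow> view.explored t = explored t"
  unfolding view.explored_def using local_presented nball_F explored_subset_W
  unfolding explored_def by simp

lemma local_component: "t \<le> m \<Longrightarrow> view.component t x = component t x"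
  unfolding view.component_def component_def
  using local_explored F_Int[OF explored_subset_W] by simp

lemma local_node: "1 \<le> t \<Longrightarrow> t \<le> m \<Longrightarrow> view.node t = node t"
  unfolding view.node_def node_def using m by simp

lemma local_new_component: "1 \<le> t \<Longrightarrow> t \<le> m \<Longrightarrow> view.new_component t = new_component t"
  unfolding view.new_component_def new_component_def using local_node local_component by simp

lemma local_absorbed: "1 \<le> t \<Longrightarrow> t \<le> m \<Longrightarrow> view.absorbed t = absorbed t"
  unfolding view.absorbed_def absorbed_def
  using local_new_component local_explored[of "t - 1"] local_component[of "t - 1"] by simp

lemma local_presented_count: "t \<le> m \<Longrightarrow> view.presented_count t = presented_count t"
  unfolding view.presented_count_def presented_count_def using local_presented by (intro ext) simp

lemma local_winner: "1 \<le> t \<Longrightarrow> t \<le> m \<Longrightarrow> view.winner t = winner t"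
  unfolding view.winner_def winner_def
  using local_absorbed local_presented_count[of "t - 1"] by simp

lemma local_losers: "1 \<le> t \<Longrightarrow> t \<le> m \<Longrightarrow> view.losers t = losers t"
  unfolding view.losers_def losers_def using local_absorbed local_winner by simp

lemma local_base_colour: "t \<le> m \<Longrightarrow> view.base_colour t = base_colour t"
proof (induction t)
  case (Suc t)
  let ?B = "nball E (new_component (Suc t)) l"
  have t: "1 \<le> Suc t" "Suc t \<le> m"
    using Suc.prems by auto
  have IH: "view.base_colour t = base_colour t"
    using Suc by simp
  have B: "nball F (new_component (Suc t)) l = ?B"
    using nball_F nball_new_component_subset_W[OF t(2)] by blast
  have IE: "induced_edges F ?B = induced_edges E ?B"
    unfolding induced_edges_def using F_Int[OF nball_new_component_subset_W[OF t(2)]] by simp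
  show ?case
    unfolding view.base_colour.simps base_colour.simps Let_def IH local_new_component[OF t]
      local_absorbed[OF t] local_winner[OF t] B IE ..
qed simp

lemma local_seeds: "t \<le> m \<Longrightarrow> view.seeds t L = seeds t L"
  unfolding view.seeds_def seeds_def using local_presented[of "t - 1"] by simp

lemma local_zone_radius: "t \<le> m \<Longrightarrow> view.zone_radius t L = zone_radius t L"
  unfolding view.zone_radius_def zone_radius_def using local_seeds by simp

lemma local_zone: "t \<le> m \<Longrightarrow> view.zone t L = zone t L"
  unfolding view.zone_def zone_def
  using local_seeds local_zone_radius nball_F nball_seeds_subset_W zone_radius_le_R
  by (metis diff_le_self le_trans)

lemma local_transition_perm: "t \<le> m \<Longrightarrow> view.transition_perm t L = transition_perm t L"
  unfolding view.transition_perm_def transition_perm_def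
  using local_base_colour[of t] local_base_colour[of "t - 1"] by simp

lemma local_loses: "t \<le> m \<Longrightarrow> view.loses t L = loses t L"
  unfolding view.loses_def loses_def using local_losers by auto

lemma local_zone_at:
  assumes "t \<le> m"
  shows "(\<lambda>t'. \<exists>L. t' \<le> t \<and> view.loses t' L \<and> x \<in> view.zone t' L) =
    (\<lambda>t'. \<exists>L. t' \<le> t \<and> loses t' L \<and> x \<in> zone t' L)"
proof (rule ext)
  fix t'
  show "(\<exists>L. t' \<le> t \<and> view.loses t' L \<and> x \<in> view.zone t' L) =
    (\<exists>L. t' \<le> t \<and> loses t' L \<and> x \<in> zone t' L)"
  proof (cases "t' \<le> t")
    case True
    then have "t' \<le> m"
      using assms by simp
    then show ?thesis
      using local_loses local_zone by simp
  qed simp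
qed

lemma local_in_zone: "t \<le> m \<Longrightarrow> view.in_zone t x = in_zone t x"
  unfolding view.in_zone_def in_zone_def using local_zone_at by simp

lemma local_zone_time: "t \<le> m \<Longrightarrow> view.zone_time t x = zone_time t x"
  unfolding view.zone_time_def zone_time_def using local_zone_at by simp

lemma local_zone_loser:
  assumes t: "t \<le> m" and x: "in_zone t x"
  shows "view.zone_loser t x = zone_loser t x"
proof -
  have "zone_time t x \<le> m"
    using zone_time_props[OF x] t by simp
  then have "(\<lambda>L. view.loses (zone_time t x) L \<and> x \<in> view.zone (zone_time t x) L) =
      (\<lambda>L. loses (zone_time t x) L \<and> x \<in> zone (zone_time t x) L)"
    using local_loses local_zone by simp
  then show ?thesis
    unfolding view.zone_loser_def zone_loser_def local_zone_time[OF t] by simp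
qed

lemma local_zone_colour:
  assumes t: "t \<le> m" and x: "x \<in> zone t L"
  shows "view.zone_colour t L x = zone_colour t L x"
proof -
  have "set_dist F (seeds t L) x = set_dist E (seeds t L) x"
  proof (rule set_dist_cong)
    show "x \<in> nball E (seeds t L) (zone_radius t L - 1)"
      using x unfolding zone_def .
    show "nball F (seeds t L) r = nball E (seeds t L) r" if "r \<le> zone_radius t L - 1" for r
      using that zone_radius_le_R[of t L] nball_F nball_seeds_subset_W[OF t] by simp
  qed
  then show ?thesis
    unfolding view.zone_colour_def zone_colour_def
    using local_seeds local_zone_radius local_transition_perm local_base_colour[of "t - 1"] t
    by simp
qed

lemma local_label:
  assumes t: "t \<le> m"
  shows "view.label t x = label t x"
proof (cases "in_zone t x")
  case True
  have "zone_time t x \<le> m" "x \<in> zone (zone_time t x) (zone_loser t x)"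
    using zone_time_props[OF True] t by auto
  then show ?thesis
    unfolding view.label_def label_def
    using True local_in_zone[OF t] local_zone_time[OF t] local_zone_loser[OF t True]
      local_zone_colour by simp
next
  case False
  then show ?thesis
    unfolding view.label_def label_def using local_in_zone[OF t] local_base_colour[OF t] by simp
qed

lemma local_output_colour: "1 \<le> t \<Longrightarrow> t \<le> m \<Longrightarrow> view.output_colour t = output_colour t"
  unfolding view.output_colour_def output_colour_def using local_label local_node by simp

end

definition colouring_alg :: "nat \<Rightarrow> nat \<Rightarrow> online_alg" where
  "colouring_alg k l =
     (\<lambda>n pre W F. online_run.output_colour k l (zone_width k n) F pre (length pre))"

lemma online_output_colouring_alg:
  assumes "i < length \<sigma>"
  shows "online_output (colouring_alg k l) (length \<sigma>) (zone_width k (length \<sigma>) + l) E \<sigma> i =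
    online_run.output_colour k l (zone_width k (length \<sigma>)) E \<sigma> (Suc i)"
proof -
  interpret online_run_prefix k l "zone_width k (length \<sigma>)" E \<sigma> "Suc i"
    by unfold_locales (use assms in auto)
  have "online_output (colouring_alg k l) (length \<sigma>) (zone_width k (length \<sigma>) + l) E \<sigma> i =
      view.output_colour (Suc i)"
    unfolding online_output_def colouring_alg_def F_def W_def presented_def Let_def
    using assms by simp
  then show ?thesis
    using local_output_colour by simp
qed

context
  fixes k l :: nat and V :: "nat set" and E :: "(nat \<times> nat) set" and \<sigma> :: "nat list"
  assumes G: "graph V E" "in_L k l V E" "distinct \<sigma>" "set \<sigma> = V"
begin

interpretation online_run_graph k l "zone_width k (card V)" E \<sigma> V
  using G by unfold_locales auto

lemma length_\<sigma>: "length \<sigma> = card V"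
  using distinct_card[OF G(3)] G(4) by simp

lemma online_output_eq_output_colour:
  "i < card V \<Longrightarrow>
    online_output (colouring_alg k l) (card V) (zone_width k (card V) + l) E \<sigma> i =
      output_colour (Suc i)"
  using online_output_colouring_alg[of i \<sigma> k l E] length_\<sigma> by simp

lemma colouring_alg_range:
  "i < card V \<Longrightarrow>
    online_output (colouring_alg k l) (card V) (zone_width k (card V) + l) E \<sigma> i \<in> {1..k+1}"
  using online_output_eq_output_colour output_colour_range length_\<sigma> by simp

lemma colouring_alg_proper:
  "i < card V \<Longrightarrow> j < card V \<Longrightarrow> (\<sigma> ! i, \<sigma> ! j) \<in> E \<Longrightarrow>
    online_output (colouring_alg k l) (card V) (zone_width k (card V) + l) E \<sigma> i \<noteq>
    online_output (colouring_alg k l) (card V) (zone_width k (card V) + l) E \<sigma> j"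
  using online_output_eq_output_colour output_colour_proper length_\<sigma> by simp

end

theorem theorem4:
  fixes k l :: nat
  assumes "k \<ge> 2"
  shows "\<forall>c::nat. c \<ge> 1 \<longrightarrow>
    (\<exists>(A::online_alg) (T::nat \<Rightarrow> nat).
       (\<lambda>n. real (T n)) \<in> O(\<lambda>n. ln (real n)) \<and>
       (\<forall>V E \<sigma>. graph V E \<and> connected_graph V E \<and> in_L k l V E \<and>
          V \<subseteq> {1..c * card V ^ c} \<and> distinct \<sigma> \<and> set \<sigma> = V \<longrightarrow>
          (\<forall>i < card V. online_output A (card V) (T (card V)) E \<sigma> i \<in> {1..k+1}) \<and>
          (\<forall>i < card V. \<forall>j < card V. (\<sigma> ! i, \<sigma> ! j) \<in> E \<longrightarrow>
             online_output A (card V) (T (card V)) E \<sigma> i \<noteq>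
             online_output A (card V) (T (card V)) E \<sigma> j)))"
proof (intro allI impI exI[of _ "colouring_alg k l"] exI[of _ "\<lambda>n. zone_width k n + l"] conjI)
  show "(\<lambda>n. real (zone_width k n + l)) \<in> O(\<lambda>n. ln (real n))"
    by (rule zone_width_bigo)
qed (use colouring_alg_range colouring_alg_proper in blast)+

end
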